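(* Let $\mathcal{H}_{gr}$ be the (non-separable) Hilbert space with orthonormal basis $\{|\lambda,\xi\rangle : \lambda,\xi\in\mathbb{R}\}$, i.e. $\langle\lambda',\xi'|\lambda,\xi\rangle=\delta_{\lambda',\lambda}\delta_{\xi',\xi}$ (Kronecker deltas), and let $\mathcal{D}_{gr}$ be the dense subspace of finite linear combinations of basis vectors. Fix constants $N,\hbar,\beta,\Delta,\mu_y>0$ and put $K:=4^{-2}N\hbar\beta^{-1}\Delta^{-1/2}$. Define $\eta:\mathbb{R}\to\mathbb{R}$ by $\eta(\lambda)=|\lambda|^{-1/2}$ for $\lambda\neq0$ and $\eta(0)=0$, and the coefficient functions $u_0(\lambda)=-4\lambda^2\eta^2(\lambda)$, $u_{\pm4}(\lambda)=2\eta(\lambda\pm4)\lambda^2\eta(\lambda)$, $u_{\pm2,2}(\lambda,\xi)=\pm\frac{3}{\mu_y}\eta(\lambda\pm2)\lambda\xi\eta(\lambda)$, $u_{\pm2,-2}(\lambda,\xi)=-u_{\pm2,2}(\lambda,\xi)$. Define operators on $\mathcal{D}_{gr}$ by linear extension of $\hat u_0|\lambda,\xi\rangle=u_0(\lambda)|\lambda,\xi\rangle$, $\hat u_{\pm4}|\lambda,\xi\rangle=u_{\pm4}(\lambda)|\lambda\pm4,\xi\rangle$, $\hat u_{\pm2,2}|\lambda,\xi\rangle=u_{\pm2,2}(\lambda,\xi)|\lambda\pm2,\xi+2\mu_y\rangle$, $\hat u_{\pm2,-2}|\lambda,\xi\rangle=u_{\pm2,-2}(\lambda,\xi)|\lambda\pm2,\xi-2\mu_y\rangle$,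 and let $\hat C:=K\big(\sum_{r\in\{0,4,-4\}}\hat u_r+\sum_{k,l\in\{2,-2\}}\hat u_{k,l}\big)$ with domain $\mathcal{D}_{gr}$. Then $\mathcal{D}_{gr}$ is contained in the domain of the adjoint $\hat C^\dagger$, and the symmetric operator $\hat C^{sym}:=\frac12(\hat C+\hat C^\dagger)$ with domain $\mathcal{D}_{gr}$ is essentially self-adjoint in $\mathcal{H}_{gr}$.
   Context: $\hat C$ is the quantized (gravitational) scalar constraint operator of five-dimensional loop quantum Kaluza–Klein cosmology; $\hat C^\dagger$ denotes the Hilbert-space adjoint of $\hat C$. An operator is essentially self-adjoint if its closure is self-adjoint. *)

theory Defs
  imports "HOL-Analysis.Analysis"
begin

definition l2 :: "('a \<Rightarrow> complex) set" where
  "l2 = {f. (\<lambda>x. (cmod (f x))^2) summable_on UNIV}"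

definition l2_inner :: "('a \<Rightarrow> complex) \<Rightarrow> ('a \<Rightarrow> complex) \<Rightarrow> complex" where
  "l2_inner f g = (\<Sum>\<^sub>\<infinity>x. cnj (f x) * g x)"

definition l2_norm :: "('a \<Rightarrow> complex) \<Rightarrow> real" where
  "l2_norm f = sqrt (\<Sum>\<^sub>\<infinity>x. (cmod (f x))^2)"

definition ket :: "'a \<Rightarrow> ('a \<Rightarrow> complex)" where
  "ket p = (\<lambda>q. if q = p then 1 else 0)"

text \<open>Finite linear combinations of basis vectors.\<close>
definition fin_span :: "('a \<Rightarrow> complex) set" where
  "fin_span = {f. finite {x. f x \<noteq> 0}}"

definition l2_dense :: "('a \<Rightarrow> complex) set \<Rightarrow> bool" where
  "l2_dense S \<longleftrightarrow> S \<subseteq> l2 \<and> (\<forall>f\<in>l2. \<forall>e>0. \<exists>g\<in>S. l2_norm (\<lambda>x. f x - g x) < e)"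

definition op_dom :: "(('a \<Rightarrow> complex) \<times> ('a \<Rightarrow> complex)) set \<Rightarrow> ('a \<Rightarrow> complex) set" where
  "op_dom G = fst ` G"

definition l2_adj :: "(('a \<Rightarrow> complex) \<times> ('a \<Rightarrow> complex)) set
                      \<Rightarrow> (('a \<Rightarrow> complex) \<times> ('a \<Rightarrow> complex)) set" where
  "l2_adj G = {(g, h). g \<in> l2 \<and> h \<in> l2 \<and> (\<forall>(f, k)\<in>G. l2_inner g k = l2_inner h f)}"

definition l2_closure :: "(('a \<Rightarrow> complex) \<times> ('a \<Rightarrow> complex)) set
                          \<Rightarrow> (('a \<Rightarrow> complex) \<times> ('a \<Rightarrow> complex)) set" where
  "l2_closure G = {(f, k). f \<in> l2 \<and> k \<in> l2 \<and>
      (\<exists>F :: nat \<Rightarrow> ('a \<Rightarrow> complex) \<times> ('a \<Rightarrow> complex). (\<forall>n. F n \<in> G) \<and>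
         (\<lambda>n. l2_norm (\<lambda>x. fst (F n) x - f x)) \<longlonglongrightarrow> 0 \<and>
         (\<lambda>n. l2_norm (\<lambda>x. snd (F n) x - k x)) \<longlonglongrightarrow> 0)}"

definition self_adjoint :: "(('a \<Rightarrow> complex) \<times> ('a \<Rightarrow> complex)) set \<Rightarrow> bool" where
  "self_adjoint G \<longleftrightarrow> G \<subseteq> l2 \<times> l2 \<and> l2_dense (op_dom G) \<and> l2_adj G = G"

definition essentially_self_adjoint :: "(('a \<Rightarrow> complex) \<times> ('a \<Rightarrow> complex)) set \<Rightarrow> bool" where
  "essentially_self_adjoint G \<longleftrightarrow> self_adjoint (l2_closure G)"

definition eta :: "real \<Rightarrow> real" where
  "eta l = (if l = 0 then 0 else 1 / sqrt \<bar>l\<bar>)"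

definition Kconst :: "real \<Rightarrow> real \<Rightarrow> real \<Rightarrow> real \<Rightarrow> real" where
  "Kconst N hbar beta Delta = N * hbar / (4^2 * beta * sqrt Delta)"

definition u0 :: "real \<Rightarrow> real" where
  "u0 l = - 4 * l^2 * (eta l)^2"

text \<open>u4 s l = u_{s*4}(l) for s = 1 or -1.\<close>
definition u4 :: "real \<Rightarrow> real \<Rightarrow> real" where
  "u4 s l = 2 * eta (l + s * 4) * l^2 * eta l"

text \<open>u2 mu s l x = u_{s*2,2}(l,x) for s = 1 or -1; u_{s*2,-2} = - u2 mu s.\<close>
definition u2 :: "real \<Rightarrow> real \<Rightarrow> real \<Rightarrow> real \<Rightarrow> real" where
  "u2 mu s l x = s * (3 / mu) * eta (l + s * 2) * l * x * eta l"

definition C_ket :: "real \<Rightarrow> real \<Rightarrow> real \<times> real \<Rightarrow> (real \<times> real \<Rightarrow> complex)" where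
  "C_ket K mu p = (case p of (l, x) \<Rightarrow> (\<lambda>q. complex_of_real K * (
       of_real (u0 l) * ket (l, x) q
     + of_real (u4 1 l) * ket (l + 4, x) q
     + of_real (u4 (-1) l) * ket (l - 4, x) q
     + of_real (u2 mu 1 l x) * ket (l + 2, x + 2 * mu) q
     + of_real (u2 mu (-1) l x) * ket (l - 2, x + 2 * mu) q
     + of_real (- u2 mu 1 l x) * ket (l + 2, x - 2 * mu) q
     + of_real (- u2 mu (-1) l x) * ket (l - 2, x - 2 * mu) q)))"

definition C_op :: "real \<Rightarrow> real \<Rightarrow> (real \<times> real \<Rightarrow> complex) \<Rightarrow> (real \<times> real \<Rightarrow> complex)" where
  "C_op K mu f = (\<lambda>q. \<Sum>p\<in>{p. f p \<noteq> 0}. f p * C_ket K mu p q)"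

definition C_graph :: "real \<Rightarrow> real \<Rightarrow> ((real \<times> real \<Rightarrow> complex) \<times> (real \<times> real \<Rightarrow> complex)) set" where
  "C_graph K mu = {(f, C_op K mu f) | f. f \<in> fin_span}"

definition C_dag :: "real \<Rightarrow> real \<Rightarrow> (real \<times> real \<Rightarrow> complex) \<Rightarrow> (real \<times> real \<Rightarrow> complex)" where
  "C_dag K mu g = (THE h. (g, h) \<in> l2_adj (C_graph K mu))"

definition Csym_graph :: "real \<Rightarrow> real \<Rightarrow> ((real \<times> real \<Rightarrow> complex) \<times> (real \<times> real \<Rightarrow> complex)) set" where
  "Csym_graph K mu = {(f, \<lambda>q. (C_op K mu f q + C_dag K mu f q) / 2) | f. f \<in> fin_span}"

end

(* The constraint operator and its formal adjoint act on finitely supported functions on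
   R x R as shift operators f |-> (p |-> sum_j c_j(p) f(p + d_j)), so that C^dagger restricted to
   D_gr is the formal adjoint and C^sym is a formally symmetric shift operator. Its coefficients
   are bounded by (1 + |lambda| + |xi|) times a weight kappa(lambda) that is invariant under all
   shifts: eta is singular only at lambda = 0, and kappa is a 2-periodic majorant of eta^2.

   For such an operator T the closure of its restriction to D_gr is the maximal operator
   {(g, T g). g, T g in l^2}, which is also its adjoint. Indeed, every such g is approximated in
   graph norm by first restricting it to a level set {kappa <= s} (this commutes with T), then
   multiplying by a cutoff in |lambda| + |xi| with Lipschitz constant 1/R, whose commutator with
   T stays bounded as R grows because the coefficients grow only linearly, and finally
   truncating to a finite support, where T is bounded. *)
theory Submission
  imports Defs
begin

section \<open>Square-summable functions\<close>

lemma l2_norm_nonneg: "0 \<le> l2_norm f"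
  by (simp add: l2_norm_def infsum_nonneg)

lemma l2_norm_power2: "(l2_norm f)\<^sup>2 = (\<Sum>\<^sub>\<infinity>x. (cmod (f x))\<^sup>2)"
  by (simp add: l2_norm_def infsum_nonneg)

lemma l2_dominated:
  assumes "w summable_on UNIV" and "\<And>x. (cmod (f x))\<^sup>2 \<le> w x"
  shows "f \<in> l2" and "(l2_norm f)\<^sup>2 \<le> infsum w UNIV"
proof -
  show f: "f \<in> l2"
    unfolding l2_def by (auto intro: summable_on_comparison_test[OF assms(1)] assms(2))
  show "(l2_norm f)\<^sup>2 \<le> infsum w UNIV"
    unfolding l2_norm_power2 using f assms by (intro infsum_mono) (auto simp: l2_def)
qed

lemma l2_dominated_norm_less:
  assumes "w summable_on UNIV" and "\<And>x. (cmod (f x))\<^sup>2 \<le> w x" and "infsum w UNIV < \<epsilon>\<^sup>2" and "0 \<le> \<epsilon>"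
  shows "l2_norm f < \<epsilon>"
proof (rule power2_less_imp_less)
  show "(l2_norm f)\<^sup>2 < \<epsilon>\<^sup>2" using l2_dominated(2)[OF assms(1,2)] assms(3) by linarith
qed (rule assms(4))

lemma l2_normsq_summable: "f \<in> l2 \<Longrightarrow> (\<lambda>x. (cmod (f x))\<^sup>2) summable_on UNIV"
  by (simp add: l2_def)

lemma finite_support_summable:
  fixes h :: "'a \<Rightarrow> 'b::{comm_monoid_add, topological_space}"
  assumes "finite {x. h x \<noteq> 0}" shows "h summable_on UNIV"
proof -
  have "h summable_on {x. h x \<noteq> 0}" using assms by simp
  moreover have "h summable_on UNIV \<longleftrightarrow> h summable_on {x. h x \<noteq> 0}"
    by (rule summable_on_cong_neutral) auto
  ultimately show ?thesis by simp
qed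

lemma finite_support_in_l2: "finite {x. f x \<noteq> 0} \<Longrightarrow> f \<in> l2"
  unfolding l2_def by (simp add: finite_support_summable)

lemma fin_span_in_l2: "f \<in> fin_span \<Longrightarrow> f \<in> l2"
  by (simp add: fin_span_def finite_support_in_l2)

lemma norm_le_l2_norm:
  assumes "f \<in> l2" shows "cmod (f x) \<le> l2_norm f"
proof -
  have "(cmod (f x))\<^sup>2 = (\<Sum>\<^sub>\<infinity>y\<in>{x}. (cmod (f y))\<^sup>2)" by simp
  also have "\<dots> \<le> (l2_norm f)\<^sup>2"
    unfolding l2_norm_power2 using assms by (intro infsum_mono2) (auto simp: l2_def)
  finally show ?thesis using l2_norm_nonneg by (rule power2_le_imp_le)
qed

lemma l2_norm_mono:
  assumes "g \<in> l2" and "\<And>x. cmod (f x) \<le> cmod (g x)"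
  shows "f \<in> l2" and "l2_norm f \<le> l2_norm g"
proof -
  have le: "(cmod (f x))\<^sup>2 \<le> (cmod (g x))\<^sup>2" for x
    using assms(2) by (simp add: power_mono)
  show "f \<in> l2" using l2_dominated(1)[OF l2_normsq_summable[OF assms(1)] le] .
  have "(l2_norm f)\<^sup>2 \<le> (l2_norm g)\<^sup>2"
    using l2_dominated(2)[OF l2_normsq_summable[OF assms(1)] le] by (simp add: l2_norm_power2)
  then show "l2_norm f \<le> l2_norm g" using l2_norm_nonneg by (rule power2_le_imp_le)
qed

lemma l2_uminus: "f \<in> l2 \<Longrightarrow> (\<lambda>x. - f x) \<in> l2"
  by (simp add: l2_def)

lemma summable_norm_mult:
  assumes "f \<in> l2" and "g \<in> l2"
  shows "(\<lambda>x. cmod (f x) * cmod (g x)) summable_on UNIV"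
proof (rule summable_on_comparison_test)
  show "(\<lambda>x. (cmod (f x))\<^sup>2 + (cmod (g x))\<^sup>2) summable_on UNIV"
    using assms by (intro summable_on_add) (auto simp: l2_def)
  show "cmod (f x) * cmod (g x) \<le> (cmod (f x))\<^sup>2 + (cmod (g x))\<^sup>2" for x
    using sum_squares_bound[of "cmod (f x)" "cmod (g x)"]
      mult_nonneg_nonneg[OF norm_ge_zero norm_ge_zero, of "f x" "g x"] by linarith
qed simp

lemma infsum_norm_mult_le:
  assumes f: "f \<in> l2" and g: "g \<in> l2"
  shows "(\<Sum>\<^sub>\<infinity>x. cmod (f x) * cmod (g x)) \<le> l2_norm f * l2_norm g"
proof (cases "l2_norm f = 0 \<or> l2_norm g = 0")
  case True
  then have "(\<lambda>x. cmod (f x) * cmod (g x)) = (\<lambda>_. 0)"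
    using norm_le_l2_norm[OF f] norm_le_l2_norm[OF g] by fastforce
  then show ?thesis by (simp add: l2_norm_nonneg)
next
  case False
  define a b where "a = l2_norm f" and "b = l2_norm g"
  have ab: "0 < a" "0 < b" using False l2_norm_nonneg by (auto simp: a_def b_def order_le_less)
  \<comment> \<open>weighted AM-GM, the weights chosen so that the bound sums to a * b\<close>
  have amgm: "u * v \<le> b / (2 * a) * u\<^sup>2 + a / (2 * b) * v\<^sup>2" for u v :: real
  proof -
    have "0 \<le> (b * u - a * v)\<^sup>2 / (2 * a * b)" using ab by simp
    also have "\<dots> = b / (2 * a) * u\<^sup>2 + a / (2 * b) * v\<^sup>2 - u * v"
      using ab by (simp add: field_simps power2_eq_square)
    finally show ?thesis by simp
  qed
  have sf: "(\<lambda>x. b / (2 * a) * (cmod (f x))\<^sup>2) summable_on UNIV"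
   and sg: "(\<lambda>x. a / (2 * b) * (cmod (g x))\<^sup>2) summable_on UNIV"
    by (rule summable_on_cmult_right, rule l2_normsq_summable, fact)+
  have "(\<Sum>\<^sub>\<infinity>x. cmod (f x) * cmod (g x))
      \<le> (\<Sum>\<^sub>\<infinity>x. b / (2 * a) * (cmod (f x))\<^sup>2 + a / (2 * b) * (cmod (g x))\<^sup>2)"
    by (rule infsum_mono[OF summable_norm_mult[OF f g] summable_on_add[OF sf sg] amgm])
  also have "\<dots> = (\<Sum>\<^sub>\<infinity>x. b / (2 * a) * (cmod (f x))\<^sup>2) + (\<Sum>\<^sub>\<infinity>x. a / (2 * b) * (cmod (g x))\<^sup>2)"
    by (rule infsum_add[OF sf sg])
  also have "\<dots> = b / (2 * a) * a\<^sup>2 + a / (2 * b) * b\<^sup>2"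
    by (simp only: infsum_cmult_right' l2_norm_power2 a_def b_def)
  also have "\<dots> = a * b" using ab by (simp add: field_simps power2_eq_square)
  finally show ?thesis by (simp add: a_def b_def)
qed

lemma l2_inner_summable:
  assumes "f \<in> l2" and "g \<in> l2"
  shows "(\<lambda>x. cnj (f x) * g x) summable_on UNIV"
proof (rule abs_summable_summable)
  show "(\<lambda>x. cmod (cnj (f x) * g x)) summable_on UNIV"
    using summable_norm_mult[OF assms] by (simp add: norm_mult)
qed

lemma norm_l2_inner_le:
  assumes "f \<in> l2" and "g \<in> l2"
  shows "cmod (l2_inner f g) \<le> l2_norm f * l2_norm g"
proof -
  have "cmod (l2_inner f g) \<le> (\<Sum>\<^sub>\<infinity>x. cmod (cnj (f x) * g x))"
    unfolding l2_inner_def using summable_norm_mult[OF assms]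
    by (intro norm_infsum_bound) (simp add: norm_mult)
  also have "\<dots> \<le> l2_norm f * l2_norm g"
    using infsum_norm_mult_le[OF assms] by (simp add: norm_mult)
  finally show ?thesis .
qed

lemma l2_add:
  assumes f: "f \<in> l2" and g: "g \<in> l2"
  shows "(\<lambda>x. f x + g x) \<in> l2" and "l2_norm (\<lambda>x. f x + g x) \<le> l2_norm f + l2_norm g"
proof -
  define w where "w x = (cmod (f x))\<^sup>2 + 2 * (cmod (f x) * cmod (g x)) + (cmod (g x))\<^sup>2" for x
  have sf: "(\<lambda>x. (cmod (f x))\<^sup>2) summable_on UNIV" and sg: "(\<lambda>x. (cmod (g x))\<^sup>2) summable_on UNIV"
    using f g by (auto simp: l2_def)
  have sfg: "(\<lambda>x. 2 * (cmod (f x) * cmod (g x))) summable_on UNIV"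
    by (rule summable_on_cmult_right[OF summable_norm_mult[OF f g]])
  have w: "w summable_on UNIV" unfolding w_def by (intro summable_on_add sf sg sfg)
  have le: "(cmod (f x + g x))\<^sup>2 \<le> w x" for x
  proof -
    have "(cmod (f x + g x))\<^sup>2 \<le> (cmod (f x) + cmod (g x))\<^sup>2"
      by (simp add: norm_triangle_ineq power_mono)
    then show ?thesis by (simp add: w_def power2_sum)
  qed
  show "(\<lambda>x. f x + g x) \<in> l2" by (rule l2_dominated(1)[OF w le])
  have "(l2_norm (\<lambda>x. f x + g x))\<^sup>2 \<le> infsum w UNIV" by (rule l2_dominated(2)[OF w le])
  also have "\<dots> = (l2_norm f)\<^sup>2 + 2 * (\<Sum>\<^sub>\<infinity>x. cmod (f x) * cmod (g x)) + (l2_norm g)\<^sup>2"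
    unfolding w_def l2_norm_power2
    by (simp only: infsum_add summable_on_add sf sg sfg infsum_cmult_right')
  also have "\<dots> \<le> (l2_norm f + l2_norm g)\<^sup>2"
    using infsum_norm_mult_le[OF f g] by (simp add: power2_sum)
  finally show "l2_norm (\<lambda>x. f x + g x) \<le> l2_norm f + l2_norm g"
    by (rule power2_le_imp_le) (simp add: l2_norm_nonneg)
qed

lemma l2_diff: "f \<in> l2 \<Longrightarrow> g \<in> l2 \<Longrightarrow> (\<lambda>x. f x - g x) \<in> l2"
  using l2_add(1)[of f "\<lambda>x. - g x"] by (simp add: l2_uminus)

lemma l2_dist_triangle:
  assumes "f \<in> l2" and "g \<in> l2" and "h \<in> l2"
  shows "l2_norm (\<lambda>x. f x - h x) \<le> l2_norm (\<lambda>x. f x - g x) + l2_norm (\<lambda>x. g x - h x)"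
  using l2_add(2)[OF l2_diff[OF assms(1,2)] l2_diff[OF assms(2,3)]] by simp

lemma l2_inner_diff_right:
  assumes "f \<in> l2" and "u \<in> l2" and "v \<in> l2"
  shows "l2_inner f (\<lambda>x. u x - v x) = l2_inner f u - l2_inner f v"
proof -
  have "l2_inner f (\<lambda>x. u x - v x) = (\<Sum>\<^sub>\<infinity>x. cnj (f x) * u x + - (cnj (f x) * v x))"
    by (simp add: l2_inner_def right_diff_distrib)
  also have "\<dots> = l2_inner f u - l2_inner f v"
    unfolding l2_inner_def using l2_inner_summable assms
    by (subst infsum_add) (auto simp: summable_on_uminus infsum_uminus)
  finally show ?thesis .
qed

lemma infsum_shift:
  fixes a :: "'a::ab_group_add"
  shows "(\<lambda>p. w (p + a)) summable_on UNIV \<longleftrightarrow> w summable_on UNIV"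
    and "(\<Sum>\<^sub>\<infinity>p. w (p + a)) = infsum w UNIV"
  using summable_on_reindex_bij_betw[OF bij_plus_right[of a], of w]
    infsum_reindex_bij_betw[OF bij_plus_right[of a], of w] by auto

lemma infsum_finite_sum:
  fixes f :: "'i \<Rightarrow> 'a \<Rightarrow> 'b::{topological_comm_monoid_add, t2_space}"
  assumes "finite I" and "\<And>i. i \<in> I \<Longrightarrow> f i summable_on A"
  shows "(\<lambda>x. \<Sum>i\<in>I. f i x) summable_on A \<and> (\<Sum>\<^sub>\<infinity>x\<in>A. \<Sum>i\<in>I. f i x) = (\<Sum>i\<in>I. infsum (f i) A)"
  using assms by (induction I rule: finite_induct) (auto simp: infsum_add summable_on_add)

lemma finite_tail_small:
  fixes w :: "'a \<Rightarrow> real"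
  assumes "w summable_on UNIV" and "\<And>x. 0 \<le> w x" and "0 < \<delta>"
  shows "\<exists>F. finite F \<and> (\<Sum>\<^sub>\<infinity>x. if x \<in> F then 0 else w x) < \<delta>"
proof -
  obtain F where F: "finite F" "dist (sum w F) (infsum w UNIV) \<le> \<delta> / 2"
    using infsum_finite_approximation[OF assms(1), of "\<delta> / 2"] assms(3) by auto
  have "(\<Sum>\<^sub>\<infinity>x. if x \<in> F then 0 else w x) = infsum w (UNIV - F)"
    by (rule infsum_cong_neutral) auto
  also have "\<dots> = infsum w UNIV - sum w F"
    using assms F by (subst infsum_Diff) auto
  also have "\<dots> < \<delta>" using F(2) assms(3) unfolding dist_real_def abs_diff_le_iff by linarith
  finally show ?thesis using F by blast
qed

lemma level_tail_small:
  fixes w \<phi> :: "'a \<Rightarrow> real"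
  assumes "w summable_on UNIV" and "\<And>x. 0 \<le> w x" and "0 < \<delta>"
  shows "\<exists>r\<^sub>0. \<forall>r\<ge>r\<^sub>0. (\<Sum>\<^sub>\<infinity>x. if r < \<phi> x then w x else 0) < \<delta>"
proof -
  obtain F where F: "finite F" and tail: "(\<Sum>\<^sub>\<infinity>x. if x \<in> F then 0 else w x) < \<delta>"
    using finite_tail_small[OF assms] by blast
  have "(\<Sum>\<^sub>\<infinity>x. if r < \<phi> x then w x else 0) < \<delta>" if r: "Max (insert 0 (\<phi> ` F)) \<le> r" for r
  proof -
    have "(if r < \<phi> x then w x else 0) \<le> (if x \<in> F then 0 else w x)" for x
      using r F assms(2)[of x] by (auto simp: Max_ge_iff)
    then have "(\<Sum>\<^sub>\<infinity>x. if r < \<phi> x then w x else 0) \<le> (\<Sum>\<^sub>\<infinity>x. if x \<in> F then 0 else w x)"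
      using assms(2) by (intro infsum_mono summable_on_comparison_test[OF assms(1)]) auto
    then show ?thesis using tail by linarith
  qed
  then show ?thesis by blast
qed

lemma l2_dense_if_fin_span_subset:
  assumes "fin_span \<subseteq> S" and "S \<subseteq> l2"
  shows "l2_dense S"
  unfolding l2_dense_def
proof (intro conjI ballI allI impI)
  fix f :: "'a \<Rightarrow> complex" and e :: real
  assume f: "f \<in> l2" and e: "0 < e"
  obtain F where F: "finite F" and tail: "(\<Sum>\<^sub>\<infinity>x. if x \<in> F then 0 else (cmod (f x))\<^sup>2) < e\<^sup>2"
    using finite_tail_small[OF l2_normsq_summable[OF f], of "e\<^sup>2"] e by auto
  define g where "g x = (if x \<in> F then f x else 0)" for x
  have "g \<in> fin_span" using F by (auto simp: fin_span_def g_def intro: finite_subset)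
  moreover have "(\<lambda>x. (cmod (f x - g x))\<^sup>2) = (\<lambda>x. if x \<in> F then 0 else (cmod (f x))\<^sup>2)"
    by (auto simp: g_def)
  then have "(l2_norm (\<lambda>x. f x - g x))\<^sup>2 < e\<^sup>2"
    using tail by (simp add: l2_norm_power2)
  then have "l2_norm (\<lambda>x. f x - g x) < e" by (rule power2_less_imp_less) (use e in simp)
  ultimately show "\<exists>g\<in>S. l2_norm (\<lambda>x. f x - g x) < e" using assms by blast
qed (use assms in auto)

lemma l2_tendsto_pointwise:
  assumes "\<And>m. (\<lambda>x. F m x - f x) \<in> l2" and "(\<lambda>m. l2_norm (\<lambda>x. F m x - f x)) \<longlonglongrightarrow> 0"
  shows "(\<lambda>m. F m x) \<longlonglongrightarrow> f x"
proof (rule LIM_zero_cancel, rule Lim_null_comparison[OF _ assms(2)])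
  show "\<forall>\<^sub>F m in sequentially. norm (F m x - f x) \<le> l2_norm (\<lambda>x. F m x - f x)"
    using norm_le_l2_norm[OF assms(1)] by simp
qed

lemma tendsto_l2_inner_right:
  assumes g: "g \<in> l2" and U: "\<And>m. U m \<in> l2" and k: "k \<in> l2"
    and lim: "(\<lambda>m. l2_norm (\<lambda>x. U m x - k x)) \<longlonglongrightarrow> 0"
  shows "(\<lambda>m. l2_inner g (U m)) \<longlonglongrightarrow> l2_inner g k"
proof (rule LIM_zero_cancel, rule Lim_null_comparison)
  show "\<forall>\<^sub>F m in sequentially.
      norm (l2_inner g (U m) - l2_inner g k) \<le> l2_norm g * l2_norm (\<lambda>x. U m x - k x)"
    using norm_l2_inner_le[OF g l2_diff[OF U k]] by (simp add: l2_inner_diff_right[OF g U k])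
  show "(\<lambda>m. l2_norm g * l2_norm (\<lambda>x. U m x - k x)) \<longlonglongrightarrow> 0"
    using tendsto_mult_right_zero[OF lim] by simp
qed

lemma l2_inner_ket: "l2_inner h (ket q) = cnj (h q)"
proof -
  have "l2_inner h (ket q) = (\<Sum>\<^sub>\<infinity>x\<in>{q}. cnj (h x) * ket q x)"
    unfolding l2_inner_def by (rule infsum_cong_neutral) (auto simp: ket_def)
  then show ?thesis by (simp add: ket_def)
qed

lemma ket_in_fin_span: "ket q \<in> fin_span"
  by (simp add: fin_span_def ket_def)

section \<open>Shift operators\<close>

definition shift_op :: "'j set \<Rightarrow> ('j \<Rightarrow> 'a \<Rightarrow> complex) \<Rightarrow> ('j \<Rightarrow> 'a::ab_group_add)
    \<Rightarrow> ('a \<Rightarrow> complex) \<Rightarrow> 'a \<Rightarrow> complex" where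
  "shift_op J c d f p = (\<Sum>j\<in>J. c j p * f (p + d j))"

definition adj_coeff :: "('j \<Rightarrow> 'a \<Rightarrow> complex) \<Rightarrow> ('j \<Rightarrow> 'a::ab_group_add) \<Rightarrow> 'j \<Rightarrow> 'a \<Rightarrow> complex" where
  "adj_coeff c d j p = cnj (c j (p - d j))"

definition shift_op_adj :: "'j set \<Rightarrow> ('j \<Rightarrow> 'a \<Rightarrow> complex) \<Rightarrow> ('j \<Rightarrow> 'a::ab_group_add)
    \<Rightarrow> ('a \<Rightarrow> complex) \<Rightarrow> 'a \<Rightarrow> complex" where
  "shift_op_adj J c d = shift_op J (adj_coeff c d) (\<lambda>j. - d j)"

lemma adj_coeff_adj_coeff: "adj_coeff (adj_coeff c d) (\<lambda>j. - d j) = c"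
  by (simp add: adj_coeff_def fun_eq_iff)

lemma shift_op_adj_adj: "shift_op_adj J (adj_coeff c d) (\<lambda>j. - d j) = shift_op J c d"
  by (simp add: shift_op_adj_def adj_coeff_adj_coeff)

lemma shift_op_diff:
  "shift_op J c d (\<lambda>x. f x - g x) p = shift_op J c d f p - shift_op J c d g p"
  by (simp add: shift_op_def right_diff_distrib sum_subtractf)

lemma shift_op_mult:
  "shift_op J c d (\<lambda>x. h x * g x) p
    = h p * shift_op J c d g p + shift_op J (\<lambda>j p. c j p * (h (p + d j) - h p)) d g p"
  by (simp add: shift_op_def sum_distrib_left sum.distrib[symmetric] algebra_simps)

lemma shift_op_fin_span:
  assumes "finite J" and "f \<in> fin_span"
  shows "shift_op J c d f \<in> fin_span"
proof -
  have "{p. shift_op J c d f p \<noteq> 0} \<subseteq> (\<Union>j\<in>J. (\<lambda>q. q - d j) ` {x. f x \<noteq> 0})"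
    by (force simp: shift_op_def intro: image_eqI[where x = "_ + d _"]
        elim: sum.not_neutral_contains_not_neutral)
  then show ?thesis using assms by (auto simp: fin_span_def intro: finite_subset)
qed

lemma norm_sum_power2_le:
  fixes z :: "'j \<Rightarrow> 'b::real_normed_vector"
  shows "(norm (\<Sum>j\<in>J. z j))\<^sup>2 \<le> real (card J) * (\<Sum>j\<in>J. (norm (z j))\<^sup>2)"
proof -
  have "(norm (\<Sum>j\<in>J. z j))\<^sup>2 \<le> (\<Sum>j\<in>J. norm (z j))\<^sup>2"
    by (simp add: norm_sum power_mono)
  also have "\<dots> \<le> (\<Sum>j\<in>J. (norm (z j))\<^sup>2) * real (card J)"
    by (rule sum_squared_le_sum_of_squares)
  finally show ?thesis by (simp add: mult.commute)
qed

lemma shift_op_l2_bound: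
  fixes u :: "'a::ab_group_add \<Rightarrow> real"
  assumes J: "finite J" and u: "u summable_on UNIV" "\<And>x. 0 \<le> u x"
    and bound: "\<And>j p. j \<in> J \<Longrightarrow> (cmod (c j p * v (p + d j)))\<^sup>2 \<le> M * u (p + d j)"
  shows "shift_op J c d v \<in> l2"
    and "(l2_norm (shift_op J c d v))\<^sup>2 \<le> (real (card J))\<^sup>2 * M * infsum u UNIV"
proof -
  define W where "W p = real (card J) * (\<Sum>j\<in>J. M * u (p + d j))" for p
  have "(\<lambda>p. M * u (p + d j)) summable_on UNIV" for j
    by (rule summable_on_cmult_right) (use u(1) infsum_shift(1) in blast)
  then have "(\<lambda>p. \<Sum>j\<in>J. M * u (p + d j)) summable_on UNIV
      \<and> (\<Sum>\<^sub>\<infinity>p. \<Sum>j\<in>J. M * u (p + d j)) = (\<Sum>j\<in>J. \<Sum>\<^sub>\<infinity>p. M * u (p + d j))"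
    by (intro infsum_finite_sum J)
  then have W: "W summable_on UNIV" and W_sum: "infsum W UNIV = (real (card J))\<^sup>2 * M * infsum u UNIV"
    unfolding W_def by (auto intro: summable_on_cmult_right simp: infsum_cmult_right' infsum_shift(2)
        power2_eq_square)
  have le: "(cmod (shift_op J c d v p))\<^sup>2 \<le> W p" for p
  proof -
    have "(cmod (shift_op J c d v p))\<^sup>2 \<le> real (card J) * (\<Sum>j\<in>J. (cmod (c j p * v (p + d j)))\<^sup>2)"
      unfolding shift_op_def by (rule norm_sum_power2_le)
    also have "\<dots> \<le> W p" unfolding W_def by (intro mult_left_mono sum_mono bound) auto
    finally show ?thesis .
  qed
  show "shift_op J c d v \<in> l2" by (rule l2_dominated(1)[OF W le])
  show "(l2_norm (shift_op J c d v))\<^sup>2 \<le> (real (card J))\<^sup>2 * M * infsum u UNIV"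
    using l2_dominated(2)[OF W le] W_sum by simp
qed

lemma l2_inner_shift_op:
  assumes J: "finite J" and f: "f \<in> fin_span"
  shows "l2_inner g (shift_op J c d f) = l2_inner (shift_op_adj J c d g) f"
proof -
  define X where "X j p = cnj (g p) * (c j p * f (p + d j))" for j p
  define Y where "Y j q = cnj (adj_coeff c d j q * g (q - d j)) * f q" for j q
  have fin: "finite {x. f x \<noteq> 0}" using f by (simp add: fin_span_def)
  have X: "X j summable_on UNIV" for j
  proof (rule finite_support_summable, rule finite_subset)
    show "{p. X j p \<noteq> 0} \<subseteq> (\<lambda>q. q - d j) ` {x. f x \<noteq> 0}"
      by (auto simp: X_def intro!: image_eqI[where x = "_ + d j"])
  qed (use fin in simp)
  have Y: "Y j summable_on UNIV" for j
    by (rule finite_support_summable, rule finite_subset[OF _ fin]) (auto simp: Y_def)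
  have "l2_inner g (shift_op J c d f) = (\<Sum>\<^sub>\<infinity>p. \<Sum>j\<in>J. X j p)"
    by (simp add: l2_inner_def shift_op_def X_def sum_distrib_left)
  also have "\<dots> = (\<Sum>j\<in>J. \<Sum>\<^sub>\<infinity>p. X j p)"
    using infsum_finite_sum[OF J] X by blast
  also have "\<dots> = (\<Sum>j\<in>J. \<Sum>\<^sub>\<infinity>q. Y j q)"
  proof (rule sum.cong[OF refl])
    fix j
    have "(\<Sum>\<^sub>\<infinity>p. X j p) = (\<Sum>\<^sub>\<infinity>q. X j (q + - d j))" by (rule infsum_shift(2)[symmetric])
    also have "\<dots> = (\<Sum>\<^sub>\<infinity>q. Y j q)" by (simp add: X_def Y_def adj_coeff_def mult_ac)
    finally show "(\<Sum>\<^sub>\<infinity>p. X j p) = (\<Sum>\<^sub>\<infinity>q. Y j q)" .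
  qed
  also have "\<dots> = (\<Sum>\<^sub>\<infinity>q. \<Sum>j\<in>J. Y j q)"
    using infsum_finite_sum[OF J] Y by metis
  also have "\<dots> = l2_inner (shift_op_adj J c d g) f"
    by (simp add: l2_inner_def shift_op_adj_def shift_op_def Y_def sum_distrib_right)
  finally show ?thesis .
qed

lemma shift_op_adj_unique:
  assumes "finite J" and "\<And>f. f \<in> fin_span \<Longrightarrow> l2_inner g (shift_op J c d f) = l2_inner h f"
  shows "h = shift_op_adj J c d g"
proof
  fix q
  have "cnj (h q) = l2_inner g (shift_op J c d (ket q))"
    by (simp add: assms(2) ket_in_fin_span l2_inner_ket)
  also have "\<dots> = cnj (shift_op_adj J c d g q)"
    by (simp add: l2_inner_shift_op[OF assms(1) ket_in_fin_span] l2_inner_ket)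
  finally show "h q = shift_op_adj J c d g q" by simp
qed

definition op_graph :: "('a \<Rightarrow> complex) set \<Rightarrow> (('a \<Rightarrow> complex) \<Rightarrow> 'a \<Rightarrow> complex)
    \<Rightarrow> (('a \<Rightarrow> complex) \<times> ('a \<Rightarrow> complex)) set" where
  "op_graph D T = {(f, T f) | f. f \<in> D}"

definition maximal_graph :: "(('a \<Rightarrow> complex) \<Rightarrow> 'a \<Rightarrow> complex)
    \<Rightarrow> (('a \<Rightarrow> complex) \<times> ('a \<Rightarrow> complex)) set" where
  "maximal_graph T = op_graph {g \<in> l2. T g \<in> l2} T"

lemma op_graph_shift_op_subset_l2:
  "finite J \<Longrightarrow> op_graph fin_span (shift_op J c d) \<subseteq> l2 \<times> l2"
  by (auto simp: op_graph_def intro: fin_span_in_l2 shift_op_fin_span)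

lemma l2_adj_shift_op:
  assumes "finite J"
  shows "l2_adj (op_graph fin_span (shift_op J c d)) = maximal_graph (shift_op_adj J c d)"
proof (intro set_eqI iffI)
  fix x assume "x \<in> l2_adj (op_graph fin_span (shift_op J c d))"
  then obtain g h where x: "x = (g, h)" "g \<in> l2" "h \<in> l2"
    and adj: "\<And>f. f \<in> fin_span \<Longrightarrow> l2_inner g (shift_op J c d f) = l2_inner h f"
    by (auto simp: l2_adj_def op_graph_def)
  then have "h = shift_op_adj J c d g" by (intro shift_op_adj_unique assms) auto
  then show "x \<in> maximal_graph (shift_op_adj J c d)"
    using x by (simp add: maximal_graph_def op_graph_def)
next
  fix x assume "x \<in> maximal_graph (shift_op_adj J c d)"
  then show "x \<in> l2_adj (op_graph fin_span (shift_op J c d))"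
    using l2_inner_shift_op[OF assms] by (auto simp: maximal_graph_def op_graph_def l2_adj_def)
qed

lemma fin_span_subset_dom_l2_adj_shift_op:
  fixes d :: "'j \<Rightarrow> 'a::ab_group_add"
  assumes "finite J"
  shows "fin_span \<subseteq> op_dom (l2_adj (op_graph fin_span (shift_op J c d)))"
proof
  fix f :: "'a \<Rightarrow> complex" assume f: "f \<in> fin_span"
  have "shift_op_adj J c d f \<in> fin_span"
    unfolding shift_op_adj_def by (rule shift_op_fin_span[OF assms f])
  then have "(f, shift_op_adj J c d f) \<in> maximal_graph (shift_op_adj J c d)"
    using f by (auto simp: maximal_graph_def op_graph_def fin_span_in_l2)
  then show "f \<in> op_dom (l2_adj (op_graph fin_span (shift_op J c d)))"
    unfolding l2_adj_shift_op[OF assms] op_dom_def by force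
qed

lemma l2_closure_shift_op_subset:
  assumes "finite J"
  shows "l2_closure (op_graph fin_span (shift_op J c d)) \<subseteq> maximal_graph (shift_op J c d)"
proof
  fix x assume "x \<in> l2_closure (op_graph fin_span (shift_op J c d))"
  then obtain f k F where x: "x = (f, k)" "f \<in> l2" "k \<in> l2"
    and FG: "\<And>m. F m \<in> op_graph fin_span (shift_op J c d)"
    and lim_f: "(\<lambda>m. l2_norm (\<lambda>y. fst (F m) y - f y)) \<longlonglongrightarrow> 0"
    and lim_k: "(\<lambda>m. l2_norm (\<lambda>y. snd (F m) y - k y)) \<longlonglongrightarrow> 0"
    unfolding l2_closure_def by blast
  have F: "fst (F m) \<in> fin_span" "snd (F m) = shift_op J c d (fst (F m))" for m
    using FG[of m] by (auto simp: op_graph_def)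
  have "fst (F m) \<in> l2" "snd (F m) \<in> l2" for m
    using F by (auto intro: fin_span_in_l2 shift_op_fin_span[OF assms])
  then have Ff: "(\<lambda>y. fst (F m) y - f y) \<in> l2" and Fk: "(\<lambda>y. snd (F m) y - k y) \<in> l2" for m
    using x by (auto intro: l2_diff)
  have "k p = shift_op J c d f p" for p
  proof (rule LIMSEQ_unique)
    show "(\<lambda>m. snd (F m) p) \<longlonglongrightarrow> k p" by (rule l2_tendsto_pointwise[OF Fk lim_k])
    have "(\<lambda>m. \<Sum>j\<in>J. c j p * fst (F m) (p + d j)) \<longlonglongrightarrow> (\<Sum>j\<in>J. c j p * f (p + d j))"
      by (intro tendsto_sum tendsto_mult_left l2_tendsto_pointwise[OF Ff lim_f])
    then show "(\<lambda>m. snd (F m) p) \<longlonglongrightarrow> shift_op J c d f p" by (simp add: F shift_op_def)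
  qed
  then have "k = shift_op J c d f" by blast
  then show "x \<in> maximal_graph (shift_op J c d)" using x by (auto simp: maximal_graph_def op_graph_def)
qed

lemma subset_l2_closure:
  assumes "G \<subseteq> l2 \<times> l2" shows "G \<subseteq> l2_closure G"
proof
  fix x assume "x \<in> G"
  then show "x \<in> l2_closure G"
    using assms unfolding l2_closure_def by (auto simp: l2_norm_def intro!: exI[where x = "\<lambda>_. x"])
qed

lemma l2_adj_l2_closure:
  assumes "G \<subseteq> l2 \<times> l2"
  shows "l2_adj (l2_closure G) = l2_adj G"
proof
  show "l2_adj (l2_closure G) \<subseteq> l2_adj G"
    using subset_l2_closure[OF assms] by (auto simp: l2_adj_def)
  show "l2_adj G \<subseteq> l2_adj (l2_closure G)"
  proof (clarsimp simp: l2_adj_def)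
    fix g h f k assume g: "g \<in> l2" and h: "h \<in> l2" and adj: "\<forall>(f, k)\<in>G. l2_inner g k = l2_inner h f"
      and fk: "(f, k) \<in> l2_closure G"
    then obtain F where F: "\<And>m. F m \<in> G" and f: "f \<in> l2" and k: "k \<in> l2"
      and lim_f: "(\<lambda>m. l2_norm (\<lambda>y. fst (F m) y - f y)) \<longlonglongrightarrow> 0"
      and lim_k: "(\<lambda>m. l2_norm (\<lambda>y. snd (F m) y - k y)) \<longlonglongrightarrow> 0"
      by (auto simp: l2_closure_def)
    have Fl2: "fst (F m) \<in> l2" "snd (F m) \<in> l2" for m using F[of m] assms by auto
    have "(\<lambda>m. l2_inner g (snd (F m))) \<longlonglongrightarrow> l2_inner g k"
      by (rule tendsto_l2_inner_right[OF g Fl2(2) k lim_k])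
    moreover have "(\<lambda>m. l2_inner g (snd (F m))) \<longlonglongrightarrow> l2_inner h f"
      using tendsto_l2_inner_right[OF h Fl2(1) f lim_f] adj F by (auto simp: split_beta)
    ultimately show "l2_inner g k = l2_inner h f" by (rule LIMSEQ_unique)
  qed
qed

lemma essentially_self_adjointI:
  assumes "G \<subseteq> l2 \<times> l2" and "fin_span \<subseteq> op_dom G" and "l2_closure G = l2_adj G"
  shows "essentially_self_adjoint G"
  unfolding essentially_self_adjoint_def self_adjoint_def
proof (intro conjI)
  show "l2_closure G \<subseteq> l2 \<times> l2" by (auto simp: l2_closure_def)
  show "l2_dense (op_dom (l2_closure G))"
  proof (rule l2_dense_if_fin_span_subset)
    show "fin_span \<subseteq> op_dom (l2_closure G)"
      using assms(2) subset_l2_closure[OF assms(1)] by (auto simp: op_dom_def)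
    show "op_dom (l2_closure G) \<subseteq> l2" by (auto simp: op_dom_def l2_closure_def)
  qed
  show "l2_adj (l2_closure G) = l2_closure G" using assms(3) l2_adj_l2_closure[OF assms(1)] by simp
qed

definition sym_coeff :: "('j \<Rightarrow> 'a \<Rightarrow> complex) \<Rightarrow> ('j \<Rightarrow> 'a::ab_group_add) \<Rightarrow> 'j + 'j \<Rightarrow> 'a \<Rightarrow> complex" where
  "sym_coeff c d = case_sum (\<lambda>j p. c j p / 2) (\<lambda>j p. adj_coeff c d j p / 2)"

definition sym_shift :: "('j \<Rightarrow> 'a::ab_group_add) \<Rightarrow> 'j + 'j \<Rightarrow> 'a" where
  "sym_shift d = case_sum d (\<lambda>j. - d j)"

lemma shift_op_sym:
  assumes "finite J"
  shows "shift_op (J <+> J) (sym_coeff c d) (sym_shift d) f p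
    = (shift_op J c d f p + shift_op_adj J c d f p) / 2"
  using assms
  by (simp add: shift_op_def shift_op_adj_def sum.Plus sym_coeff_def sym_shift_def
      sum_divide_distrib add_divide_distrib)

lemma shift_op_adj_sym:
  assumes "finite J"
  shows "shift_op_adj (J <+> J) (sym_coeff c d) (sym_shift d)
    = shift_op (J <+> J) (sym_coeff c d) (sym_shift d)"
proof (intro ext)
  fix f p
  have "shift_op_adj (J <+> J) (sym_coeff c d) (sym_shift d) f p
      = (shift_op_adj J c d f p + shift_op J c d f p) / 2"
    using assms
    by (simp add: shift_op_def shift_op_adj_def sum.Plus sym_coeff_def sym_shift_def adj_coeff_def
        sum_divide_distrib add_divide_distrib)
  then show "shift_op_adj (J <+> J) (sym_coeff c d) (sym_shift d) f p
      = shift_op (J <+> J) (sym_coeff c d) (sym_shift d) f p"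
    by (simp add: shift_op_sym[OF assms] add.commute)
qed

section \<open>Essential self-adjointness under a growth condition\<close>

definition cutoff :: "real \<Rightarrow> real \<Rightarrow> real" where
  "cutoff R t = min 1 (max 0 (2 - t / R))"

lemma cutoff_bounds: "0 \<le> cutoff R t" "cutoff R t \<le> 1"
  by (auto simp: cutoff_def)

lemma cutoff_eq_1: "0 < R \<Longrightarrow> t \<le> R \<Longrightarrow> cutoff R t = 1"
  by (auto simp: cutoff_def field_simps)

lemma cutoff_eq_0: "0 < R \<Longrightarrow> 2 * R \<le> t \<Longrightarrow> cutoff R t = 0"
  by (auto simp: cutoff_def field_simps)

lemma cutoff_Lipschitz:
  assumes "0 < R" shows "\<bar>cutoff R a - cutoff R b\<bar> \<le> \<bar>a - b\<bar> / R"
proof -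
  have "\<bar>cutoff R a - cutoff R b\<bar> \<le> \<bar>(2 - a / R) - (2 - b / R)\<bar>"
    unfolding cutoff_def by (auto simp: min_def max_def)
  also have "(2 - a / R) - (2 - b / R) = (b - a) / R" by (simp add: diff_divide_distrib)
  also have "\<bar>(b - a) / R\<bar> = \<bar>a - b\<bar> / R" using assms by (simp add: abs_minus_commute)
  finally show ?thesis .
qed

lemma cutoff_complement_le:
  assumes "0 < R" and "0 \<le> L"
  shows "(cmod (of_real (1 - cutoff R t) * z))\<^sup>2 \<le> (if R - L < t then (cmod z)\<^sup>2 else 0)"
proof (cases "t \<le> R")
  case True
  then show ?thesis using assms by (simp add: cutoff_eq_1)
next
  case False
  have "\<bar>1 - cutoff R t\<bar> \<le> 1" using cutoff_bounds[of R t] by simp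
  then have "(cmod (of_real (1 - cutoff R t) * z))\<^sup>2 \<le> (cmod z)\<^sup>2"
    by (simp add: norm_mult mult_left_le_one_le power_mono del: of_real_diff)
  then show ?thesis using False assms(2) by simp
qed

lemma l2_cutoff_complement:
  assumes f: "f \<in> l2" and R: "0 < R" and L: "0 \<le> L"
  shows "(\<lambda>x. of_real (1 - cutoff R (\<phi> x)) * f x) \<in> l2"
    and "l2_norm (\<lambda>x. of_real (1 - cutoff R (\<phi> x)) * f x)
           \<le> sqrt (\<Sum>\<^sub>\<infinity>x. if R - L < \<phi> x then (cmod (f x))\<^sup>2 else 0)"
proof -
  have tail: "(\<lambda>x. if R - L < \<phi> x then (cmod (f x))\<^sup>2 else 0) summable_on UNIV"
    by (rule summable_on_comparison_test[OF l2_normsq_summable[OF f]]) auto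
  note le = cutoff_complement_le[OF R L, of "\<phi> _" "f _"]
  show "(\<lambda>x. of_real (1 - cutoff R (\<phi> x)) * f x) \<in> l2" by (rule l2_dominated(1)[OF tail le])
  show "l2_norm (\<lambda>x. of_real (1 - cutoff R (\<phi> x)) * f x)
      \<le> sqrt (\<Sum>\<^sub>\<infinity>x. if R - L < \<phi> x then (cmod (f x))\<^sup>2 else 0)"
    by (rule real_le_rsqrt, rule l2_dominated(2)[OF tail le])
qed

lemma divide_one_plus_bounds:
  fixes M e :: real
  assumes "0 \<le> M" and "0 < e"
  shows "0 < e / (1 + M)" and "e / (1 + M) \<le> e" and "M * (e / (1 + M)) < e"
proof -
  have pos: "0 < 1 + M" using assms(1) by simp
  show "0 < e / (1 + M)" using assms(2) pos by simp
  show "e / (1 + M) \<le> e" using pos assms by (simp add: divide_le_eq algebra_simps)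
  show "M * (e / (1 + M)) < e" using pos assms(2) by (simp add: divide_less_eq)
qed

locale shift_op_growth =
  fixes J :: "'j set" and c :: "'j \<Rightarrow> 'a::ab_group_add \<Rightarrow> complex" and d :: "'j \<Rightarrow> 'a"
    and \<rho> \<kappa> :: "'a \<Rightarrow> real" and L C :: real
  assumes finite_J: "finite J"
    and \<kappa>_shift: "\<And>j p. j \<in> J \<Longrightarrow> \<kappa> (p + d j) = \<kappa> p"
    and \<rho>_shift: "\<And>j p. j \<in> J \<Longrightarrow> \<bar>\<rho> (p + d j) - \<rho> p\<bar> \<le> L"
    and coeff_growth: "\<And>j p. j \<in> J \<Longrightarrow> (cmod (c j p))\<^sup>2 \<le> C * (1 + \<rho> p)\<^sup>2 * \<kappa> p"
    and \<rho>_nonneg: "\<And>p. 0 \<le> \<rho> p" and \<kappa>_nonneg: "\<And>p. 0 \<le> \<kappa> p"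
    and L_nonneg: "0 \<le> L" and C_nonneg: "0 \<le> C"
begin

lemma coeff_bound_on_region:
  assumes "j \<in> J" and "\<kappa> p \<le> s" and "\<rho> p \<le> r"
  shows "(cmod (c j p))\<^sup>2 \<le> C * (1 + r)\<^sup>2 * s"
proof -
  have "(cmod (c j p))\<^sup>2 \<le> C * (1 + \<rho> p)\<^sup>2 * \<kappa> p" by (rule coeff_growth[OF assms(1)])
  also have "\<dots> \<le> C * (1 + r)\<^sup>2 * s"
  proof (rule mult_mono)
    show "C * (1 + \<rho> p)\<^sup>2 \<le> C * (1 + r)\<^sup>2"
      using assms(3) \<rho>_nonneg[of p] C_nonneg by (simp add: mult_left_mono power_mono)
  qed (use assms(2) \<kappa>_nonneg C_nonneg in auto)
  finally show ?thesis .
qed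

lemma shift_op_bounded_on_region:
  assumes v: "v \<in> l2" and supp: "\<And>x. v x \<noteq> 0 \<Longrightarrow> \<kappa> x \<le> s \<and> \<rho> x \<le> r"
  shows "shift_op J c d v \<in> l2"
    and "(l2_norm (shift_op J c d v))\<^sup>2 \<le> (real (card J))\<^sup>2 * (C * (1 + (r + L))\<^sup>2 * s) * (l2_norm v)\<^sup>2"
proof -
  have bound: "(cmod (c j p * v (p + d j)))\<^sup>2 \<le> C * (1 + (r + L))\<^sup>2 * s * (cmod (v (p + d j)))\<^sup>2"
    if j: "j \<in> J" for j p
  proof (cases "v (p + d j) = 0")
    case False
    then have "\<kappa> p \<le> s" "\<rho> p \<le> r + L"
      using supp[OF False] \<kappa>_shift[OF j] \<rho>_shift[OF j, of p] by auto
    then have "(cmod (c j p))\<^sup>2 \<le> C * (1 + (r + L))\<^sup>2 * s" by (rule coeff_bound_on_region[OF j])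
    then show ?thesis by (simp add: norm_mult power_mult_distrib mult_right_mono)
  qed simp
  show "shift_op J c d v \<in> l2"
    and "(l2_norm (shift_op J c d v))\<^sup>2 \<le> (real (card J))\<^sup>2 * (C * (1 + (r + L))\<^sup>2 * s) * (l2_norm v)\<^sup>2"
    using shift_op_l2_bound[OF finite_J l2_normsq_summable[OF v] _ bound]
    by (simp_all add: l2_norm_power2)
qed

lemma approx_by_finite_support:
  assumes v: "v \<in> l2" and supp: "\<And>x. v x \<noteq> 0 \<Longrightarrow> \<kappa> x \<le> s \<and> \<rho> x \<le> r"
    and s: "0 \<le> s" and \<epsilon>: "0 < \<epsilon>"
  shows "\<exists>f\<in>fin_span. l2_norm (\<lambda>x. f x - v x) < \<epsilon>
           \<and> l2_norm (\<lambda>x. shift_op J c d f x - shift_op J c d v x) < \<epsilon>"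
proof -
  define M where "M = (real (card J))\<^sup>2 * (C * (1 + (r + L))\<^sup>2 * s)"
  define \<delta> where "\<delta> = \<epsilon>\<^sup>2 / (1 + M)"
  have M: "0 \<le> M" using s C_nonneg by (simp add: M_def)
  have \<delta>: "0 < \<delta>" "\<delta> \<le> \<epsilon>\<^sup>2" "M * \<delta> < \<epsilon>\<^sup>2"
    unfolding \<delta>_def using divide_one_plus_bounds[OF M] \<epsilon> by auto
  obtain F where F: "finite F" and tail: "(\<Sum>\<^sub>\<infinity>x. if x \<in> F then 0 else (cmod (v x))\<^sup>2) < \<delta>"
    using finite_tail_small[OF l2_normsq_summable[OF v] _ \<delta>(1)] by auto
  define f where "f x = (if x \<in> F then v x else 0)" for x
  define w where "w x = f x - v x" for x
  have f: "f \<in> fin_span" using F by (auto simp: fin_span_def f_def intro: finite_subset)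
  have w: "w \<in> l2" by (rule l2_norm_mono(1)[OF v]) (simp add: w_def f_def)
  have "(\<lambda>x. (cmod (w x))\<^sup>2) = (\<lambda>x. if x \<in> F then 0 else (cmod (v x))\<^sup>2)"
    by (auto simp: w_def f_def)
  then have w_norm: "(l2_norm w)\<^sup>2 < \<delta>" using tail by (simp add: l2_norm_power2)
  have "(l2_norm (shift_op J c d w))\<^sup>2 \<le> M * (l2_norm w)\<^sup>2"
    unfolding M_def
    by (rule shift_op_bounded_on_region(2)[OF w]) (use supp in \<open>auto simp: w_def f_def split: if_splits\<close>)
  also have "\<dots> \<le> M * \<delta>" using w_norm M by (simp add: mult_left_mono)
  finally have Tw_norm: "(l2_norm (shift_op J c d w))\<^sup>2 < \<epsilon>\<^sup>2" using \<delta>(3) by linarith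
  have "l2_norm w < \<epsilon>" "l2_norm (shift_op J c d w) < \<epsilon>"
    using power2_less_imp_less[of "l2_norm w" \<epsilon>] power2_less_imp_less[of "l2_norm (shift_op J c d w)" \<epsilon>]
      w_norm Tw_norm \<delta>(2) \<epsilon> by linarith+
  moreover have "shift_op J c d w = (\<lambda>x. shift_op J c d f x - shift_op J c d v x)"
    by (simp add: w_def[abs_def] shift_op_diff fun_eq_iff)
  ultimately show ?thesis using f unfolding w_def by auto
qed

lemma shift_op_level_cut:
  "shift_op J c d (\<lambda>x. if \<kappa> x \<le> s then g x else 0) p = (if \<kappa> p \<le> s then shift_op J c d g p else 0)"
  by (simp add: shift_op_def \<kappa>_shift cong: sum.cong)

lemma approx_by_level_set:
  assumes g: "g \<in> l2" and Tg: "shift_op J c d g \<in> l2" and \<epsilon>: "0 < \<epsilon>"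
  shows "\<exists>s v. 0 \<le> s \<and> v \<in> l2 \<and> shift_op J c d v \<in> l2 \<and> (\<forall>x. v x \<noteq> 0 \<longrightarrow> \<kappa> x \<le> s)
           \<and> l2_norm (\<lambda>x. v x - g x) < \<epsilon> \<and> l2_norm (\<lambda>x. shift_op J c d v x - shift_op J c d g x) < \<epsilon>"
proof -
  define w where "w x = (cmod (g x))\<^sup>2 + (cmod (shift_op J c d g x))\<^sup>2" for x
  have w: "w summable_on UNIV" "\<And>x. 0 \<le> w x"
    unfolding w_def[abs_def] using summable_on_add[OF l2_normsq_summable[OF g] l2_normsq_summable[OF Tg]]
    by auto
  obtain r\<^sub>0 where tail: "\<And>r. r\<^sub>0 \<le> r \<Longrightarrow> (\<Sum>\<^sub>\<infinity>x. if r < \<kappa> x then w x else 0) < \<epsilon>\<^sup>2"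
    using level_tail_small[OF w, of "\<epsilon>\<^sup>2" \<kappa>] \<epsilon> by auto
  define s where "s = max r\<^sub>0 0"
  define v where "v x = (if \<kappa> x \<le> s then g x else 0)" for x
  have Tv: "shift_op J c d v = (\<lambda>p. if \<kappa> p \<le> s then shift_op J c d g p else 0)"
    unfolding v_def by (simp add: shift_op_level_cut fun_eq_iff)
  have u: "(\<lambda>x. if s < \<kappa> x then w x else 0) summable_on UNIV" "(\<Sum>\<^sub>\<infinity>x. if s < \<kappa> x then w x else 0) < \<epsilon>\<^sup>2"
    using w tail[of s] by (auto simp: s_def intro: summable_on_comparison_test[OF w(1)])
  have "l2_norm (\<lambda>x. v x - g x) < \<epsilon>"
    by (rule l2_dominated_norm_less[OF u(1) _ u(2)]) (use \<epsilon> in \<open>auto simp: v_def w_def\<close>)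
  moreover have "l2_norm (\<lambda>x. shift_op J c d v x - shift_op J c d g x) < \<epsilon>"
    by (rule l2_dominated_norm_less[OF u(1) _ u(2)]) (use \<epsilon> in \<open>auto simp: Tv w_def\<close>)
  moreover have "v \<in> l2" "shift_op J c d v \<in> l2"
    using g Tg by (auto simp: v_def Tv intro: l2_norm_mono(1))
  moreover have "0 \<le> s" "\<forall>x. v x \<noteq> 0 \<longrightarrow> \<kappa> x \<le> s" by (simp_all add: s_def v_def)
  ultimately show ?thesis by blast
qed

(* The commutator of the operator with the cutoff has coefficients of size |c j p| * L / R. They
   vanish unless rho p < 2 R + L, where |c j p| = O(R) by linear growth, so they stay bounded
   uniformly in R. *)
lemma commutator_coeff_bound:
  assumes j: "j \<in> J" and s: "\<kappa> p \<le> s" and R: "1 \<le> R"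
  shows "(cmod (c j p))\<^sup>2 * (cutoff R (\<rho> (p + d j)) - cutoff R (\<rho> p))\<^sup>2
    \<le> C * (3 + L)\<^sup>2 * s * L\<^sup>2 * (if R - L < \<rho> (p + d j) then 1 else 0)"
proof -
  have shift: "\<bar>\<rho> (p + d j) - \<rho> p\<bar> \<le> L" by (rule \<rho>_shift[OF j])
  have s0: "0 \<le> s" using s \<kappa>_nonneg[of p] by linarith
  consider "\<rho> (p + d j) \<le> R - L" | "2 * R + L \<le> \<rho> p" | "R - L < \<rho> (p + d j)" "\<rho> p < 2 * R + L"
    by linarith
  then show ?thesis
  proof cases
    case 1
    then show ?thesis using shift R L_nonneg by (simp add: cutoff_eq_1)
  next
    case 2
    then show ?thesis using shift R L_nonneg s0 C_nonneg by (simp add: cutoff_eq_0)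
  next
    case 3
    have "(cmod (c j p))\<^sup>2 \<le> C * (1 + (2 * R + L))\<^sup>2 * s"
      using 3 by (intro coeff_bound_on_region[OF j s]) simp
    moreover have "(cutoff R (\<rho> (p + d j)) - cutoff R (\<rho> p))\<^sup>2 \<le> (L / R)\<^sup>2"
    proof -
      have "\<bar>cutoff R (\<rho> (p + d j)) - cutoff R (\<rho> p)\<bar> \<le> \<bar>\<rho> (p + d j) - \<rho> p\<bar> / R"
        using R by (intro cutoff_Lipschitz) simp
      also have "\<dots> \<le> L / R" using shift R by (simp add: divide_right_mono)
      finally show ?thesis using power_mono[OF _ abs_ge_zero, of _ "L / R" 2] by simp
    qed
    ultimately have "(cmod (c j p))\<^sup>2 * (cutoff R (\<rho> (p + d j)) - cutoff R (\<rho> p))\<^sup>2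
        \<le> C * (1 + (2 * R + L))\<^sup>2 * s * (L / R)\<^sup>2"
      by (rule mult_mono) (use C_nonneg s0 in auto)
    also have "\<dots> = C * s * L\<^sup>2 * ((1 + 2 * R + L) / R)\<^sup>2"
      by (simp add: field_simps)
    also have "\<dots> \<le> C * s * L\<^sup>2 * (3 + L)\<^sup>2"
    proof -
      have "1 + 2 * R + L \<le> (3 + L) * R"
        using R mult_left_mono[OF R L_nonneg] by (simp add: algebra_simps)
      then have "(1 + 2 * R + L) / R \<le> 3 + L" using R by (simp add: divide_le_eq)
      then have "((1 + 2 * R + L) / R)\<^sup>2 \<le> (3 + L)\<^sup>2" by (rule power_mono) (use R L_nonneg in auto)
      then show ?thesis by (rule mult_left_mono) (use C_nonneg s0 in auto)
    qed
    finally show ?thesis using 3 by (simp add: mult_ac)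
  qed
qed

lemma cutoff_commutator_bound:
  assumes g: "g \<in> l2" and supp: "\<And>x. g x \<noteq> 0 \<Longrightarrow> \<kappa> x \<le> s" and R: "1 \<le> R"
  defines "E \<equiv> shift_op J (\<lambda>j p. c j p * of_real (cutoff R (\<rho> (p + d j)) - cutoff R (\<rho> p))) d g"
  shows "E \<in> l2"
    and "(l2_norm E)\<^sup>2 \<le> (real (card J))\<^sup>2 * (C * (3 + L)\<^sup>2 * s * L\<^sup>2)
                          * (\<Sum>\<^sub>\<infinity>x. if R - L < \<rho> x then (cmod (g x))\<^sup>2 else 0)"
proof -
  define u where "u x = (if R - L < \<rho> x then (cmod (g x))\<^sup>2 else 0)" for x
  have u: "u summable_on UNIV"
    unfolding u_def by (rule summable_on_comparison_test[OF l2_normsq_summable[OF g]]) auto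
  have bound: "(cmod (c j p * of_real (cutoff R (\<rho> (p + d j)) - cutoff R (\<rho> p)) * g (p + d j)))\<^sup>2
      \<le> C * (3 + L)\<^sup>2 * s * L\<^sup>2 * u (p + d j)" if j: "j \<in> J" for j p
  proof (cases "g (p + d j) = 0")
    case False
    then have "\<kappa> p \<le> s" using supp \<kappa>_shift[OF j] by metis
    from mult_right_mono[OF commutator_coeff_bound[OF j this R], of "(cmod (g (p + d j)))\<^sup>2"]
    show ?thesis by (simp add: u_def norm_mult power_mult_distrib del: of_real_diff split: if_splits)
  qed (simp add: u_def)
  show "E \<in> l2"
    and "(l2_norm E)\<^sup>2 \<le> (real (card J))\<^sup>2 * (C * (3 + L)\<^sup>2 * s * L\<^sup>2)
                          * (\<Sum>\<^sub>\<infinity>x. if R - L < \<rho> x then (cmod (g x))\<^sup>2 else 0)"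
    using shift_op_l2_bound[OF finite_J u _ bound] by (simp_all add: E_def u_def mult.assoc)
qed

lemma cutoff_error:
  assumes g: "g \<in> l2" and Tg: "shift_op J c d g \<in> l2" and supp: "\<And>x. g x \<noteq> 0 \<Longrightarrow> \<kappa> x \<le> s"
    and s: "0 \<le> s" and R: "1 \<le> R"
  defines "v \<equiv> \<lambda>x. of_real (cutoff R (\<rho> x)) * g x"
  shows "v \<in> l2" and "\<forall>x. v x \<noteq> 0 \<longrightarrow> \<kappa> x \<le> s \<and> \<rho> x \<le> 2 * R"
    and "l2_norm (\<lambda>x. v x - g x) \<le> sqrt (\<Sum>\<^sub>\<infinity>x. if R - L < \<rho> x then (cmod (g x))\<^sup>2 else 0)"
    and "l2_norm (\<lambda>x. shift_op J c d v x - shift_op J c d g x)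
           \<le> sqrt ((real (card J))\<^sup>2 * (C * (3 + L)\<^sup>2 * s * L\<^sup>2)
                    * (\<Sum>\<^sub>\<infinity>x. if R - L < \<rho> x then (cmod (g x))\<^sup>2 else 0))
             + sqrt (\<Sum>\<^sub>\<infinity>x. if R - L < \<rho> x then (cmod (shift_op J c d g x))\<^sup>2 else 0)"
proof -
  have R0: "0 < R" using R by simp
  show "v \<in> l2"
    unfolding v_def
    by (rule l2_norm_mono(1)[OF g]) (simp add: norm_mult mult_left_le_one_le cutoff_bounds)
  show "\<forall>x. v x \<noteq> 0 \<longrightarrow> \<kappa> x \<le> s \<and> \<rho> x \<le> 2 * R"
  proof (intro allI impI)
    fix x assume "v x \<noteq> 0"
    then have "g x \<noteq> 0" "cutoff R (\<rho> x) \<noteq> 0" by (auto simp: v_def)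
    then show "\<kappa> x \<le> s \<and> \<rho> x \<le> 2 * R" using supp cutoff_eq_0[OF R0, of "\<rho> x"] by force
  qed
  have "(\<lambda>x. v x - g x) = (\<lambda>x. - (of_real (1 - cutoff R (\<rho> x)) * g x))"
    by (simp add: fun_eq_iff v_def algebra_simps)
  then show "l2_norm (\<lambda>x. v x - g x) \<le> sqrt (\<Sum>\<^sub>\<infinity>x. if R - L < \<rho> x then (cmod (g x))\<^sup>2 else 0)"
    using l2_cutoff_complement(2)[OF g R0 L_nonneg] by (simp add: l2_norm_def)
  define E where "E = shift_op J (\<lambda>j p. c j p * of_real (cutoff R (\<rho> (p + d j)) - cutoff R (\<rho> p))) d g"
  define F where "F x = - (of_real (1 - cutoff R (\<rho> x)) * shift_op J c d g x)" for x
  have E: "E \<in> l2" "l2_norm E \<le> sqrt ((real (card J))\<^sup>2 * (C * (3 + L)\<^sup>2 * s * L\<^sup>2)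
                    * (\<Sum>\<^sub>\<infinity>x. if R - L < \<rho> x then (cmod (g x))\<^sup>2 else 0))"
    using cutoff_commutator_bound[OF g supp R] by (auto simp: E_def intro: real_le_rsqrt)
  have F: "F \<in> l2" "l2_norm F \<le> sqrt (\<Sum>\<^sub>\<infinity>x. if R - L < \<rho> x then (cmod (shift_op J c d g x))\<^sup>2 else 0)"
    using l2_cutoff_complement[OF Tg R0 L_nonneg, of \<rho>] unfolding F_def
    by (auto intro: l2_uminus simp: l2_norm_def)
  have "shift_op J c d v p = of_real (cutoff R (\<rho> p)) * shift_op J c d g p + E p" for p
    unfolding v_def E_def of_real_diff by (rule shift_op_mult)
  then have "(\<lambda>x. shift_op J c d v x - shift_op J c d g x) = (\<lambda>x. E x + F x)"
    by (simp add: fun_eq_iff F_def algebra_simps)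
  then show "l2_norm (\<lambda>x. shift_op J c d v x - shift_op J c d g x)
      \<le> sqrt ((real (card J))\<^sup>2 * (C * (3 + L)\<^sup>2 * s * L\<^sup>2)
               * (\<Sum>\<^sub>\<infinity>x. if R - L < \<rho> x then (cmod (g x))\<^sup>2 else 0))
        + sqrt (\<Sum>\<^sub>\<infinity>x. if R - L < \<rho> x then (cmod (shift_op J c d g x))\<^sup>2 else 0)"
    using l2_add(2)[OF E(1) F(1)] E(2) F(2) by simp
qed

lemma approx_by_cutoff:
  assumes g: "g \<in> l2" and Tg: "shift_op J c d g \<in> l2" and supp: "\<And>x. g x \<noteq> 0 \<Longrightarrow> \<kappa> x \<le> s"
    and s: "0 \<le> s" and \<epsilon>: "0 < \<epsilon>"
  shows "\<exists>r v. v \<in> l2 \<and> (\<forall>x. v x \<noteq> 0 \<longrightarrow> \<kappa> x \<le> s \<and> \<rho> x \<le> r) \<and> l2_norm (\<lambda>x. v x - g x) < \<epsilon>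
           \<and> l2_norm (\<lambda>x. shift_op J c d v x - shift_op J c d g x) < \<epsilon>"
proof -
  define Q where "Q = (real (card J))\<^sup>2 * (C * (3 + L)\<^sup>2 * s * L\<^sup>2)"
  have Q: "0 \<le> Q" using C_nonneg s by (simp add: Q_def)
  define \<delta> where "\<delta> = (\<epsilon> / 2)\<^sup>2 / (1 + Q)"
  have \<delta>: "0 < \<delta>" "\<delta> \<le> (\<epsilon> / 2)\<^sup>2" "Q * \<delta> < (\<epsilon> / 2)\<^sup>2"
    unfolding \<delta>_def using divide_one_plus_bounds[OF Q] \<epsilon> by auto
  obtain r\<^sub>1 where tail\<^sub>1: "\<And>r. r\<^sub>1 \<le> r \<Longrightarrow> (\<Sum>\<^sub>\<infinity>x. if r < \<rho> x then (cmod (g x))\<^sup>2 else 0) < \<delta>"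
    using level_tail_small[OF l2_normsq_summable[OF g] _ \<delta>(1), of \<rho>] by auto
  obtain r\<^sub>2 where tail\<^sub>2: "\<And>r. r\<^sub>2 \<le> r
      \<Longrightarrow> (\<Sum>\<^sub>\<infinity>x. if r < \<rho> x then (cmod (shift_op J c d g x))\<^sup>2 else 0) < \<delta>"
    using level_tail_small[OF l2_normsq_summable[OF Tg] _ \<delta>(1), of \<rho>] by auto
  define R where "R = max 1 (max r\<^sub>1 r\<^sub>2 + L)"
  have R: "1 \<le> R" by (simp add: R_def)
  define t\<^sub>1 where "t\<^sub>1 = (\<Sum>\<^sub>\<infinity>x. if R - L < \<rho> x then (cmod (g x))\<^sup>2 else 0)"
  define t\<^sub>2 where "t\<^sub>2 = (\<Sum>\<^sub>\<infinity>x. if R - L < \<rho> x then (cmod (shift_op J c d g x))\<^sup>2 else 0)"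
  have t: "0 \<le> t\<^sub>1" "t\<^sub>1 < \<delta>" "0 \<le> t\<^sub>2" "t\<^sub>2 < \<delta>"
    using tail\<^sub>1[of "R - L"] tail\<^sub>2[of "R - L"]
    by (auto simp: t\<^sub>1_def t\<^sub>2_def R_def intro: infsum_nonneg)
  define v where "v x = of_real (cutoff R (\<rho> x)) * g x" for x
  note err = cutoff_error[OF g Tg supp s R, folded v_def, folded t\<^sub>1_def t\<^sub>2_def Q_def]
  have t\<^sub>1_small: "sqrt t\<^sub>1 < \<epsilon> / 2" by (rule real_less_lsqrt) (use t \<delta>(2) \<epsilon> in auto)
  have t\<^sub>2_small: "sqrt t\<^sub>2 < \<epsilon> / 2" by (rule real_less_lsqrt) (use t \<delta>(2) \<epsilon> in auto)
  have Qt\<^sub>1_small: "sqrt (Q * t\<^sub>1) < \<epsilon> / 2"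
    using mult_left_mono[of t\<^sub>1 \<delta> Q] t Q \<delta>(3) \<epsilon> by (intro real_less_lsqrt) auto
  have "l2_norm (\<lambda>x. v x - g x) < \<epsilon>" using err(3) t\<^sub>1_small \<epsilon> by linarith
  moreover have "l2_norm (\<lambda>x. shift_op J c d v x - shift_op J c d g x) < \<epsilon>"
    using err(4) t\<^sub>2_small Qt\<^sub>1_small by linarith
  ultimately show ?thesis using err(1,2) by blast
qed

lemma approx_by_fin_span:
  assumes g: "g \<in> l2" and Tg: "shift_op J c d g \<in> l2" and \<epsilon>: "0 < \<epsilon>"
  shows "\<exists>f\<in>fin_span. l2_norm (\<lambda>x. f x - g x) < \<epsilon>
           \<and> l2_norm (\<lambda>x. shift_op J c d f x - shift_op J c d g x) < \<epsilon>"
proof -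
  have \<epsilon>3: "0 < \<epsilon> / 3" using \<epsilon> by simp
  obtain s g\<^sub>1 where s: "0 \<le> s" and g\<^sub>1: "g\<^sub>1 \<in> l2" "shift_op J c d g\<^sub>1 \<in> l2"
    and supp\<^sub>1: "\<forall>x. g\<^sub>1 x \<noteq> 0 \<longrightarrow> \<kappa> x \<le> s"
    and close\<^sub>1: "l2_norm (\<lambda>x. g\<^sub>1 x - g x) < \<epsilon> / 3"
      "l2_norm (\<lambda>x. shift_op J c d g\<^sub>1 x - shift_op J c d g x) < \<epsilon> / 3"
    using approx_by_level_set[OF g Tg \<epsilon>3] by blast
  obtain r g\<^sub>2 where g\<^sub>2: "g\<^sub>2 \<in> l2" and supp\<^sub>2: "\<forall>x. g\<^sub>2 x \<noteq> 0 \<longrightarrow> \<kappa> x \<le> s \<and> \<rho> x \<le> r"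
    and close\<^sub>2: "l2_norm (\<lambda>x. g\<^sub>2 x - g\<^sub>1 x) < \<epsilon> / 3"
      "l2_norm (\<lambda>x. shift_op J c d g\<^sub>2 x - shift_op J c d g\<^sub>1 x) < \<epsilon> / 3"
    using approx_by_cutoff[OF g\<^sub>1 _ s \<epsilon>3] supp\<^sub>1 by blast
  have Tg\<^sub>2: "shift_op J c d g\<^sub>2 \<in> l2" using shift_op_bounded_on_region(1)[OF g\<^sub>2] supp\<^sub>2 by blast
  obtain f where f: "f \<in> fin_span" and close\<^sub>3: "l2_norm (\<lambda>x. f x - g\<^sub>2 x) < \<epsilon> / 3"
      "l2_norm (\<lambda>x. shift_op J c d f x - shift_op J c d g\<^sub>2 x) < \<epsilon> / 3"
    using approx_by_finite_support[OF g\<^sub>2 _ s \<epsilon>3] supp\<^sub>2 by blast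
  have f_l2: "f \<in> l2" "shift_op J c d f \<in> l2"
    using f by (auto intro: fin_span_in_l2 shift_op_fin_span finite_J)
  have "l2_norm (\<lambda>x. f x - g x)
      \<le> l2_norm (\<lambda>x. f x - g\<^sub>2 x) + l2_norm (\<lambda>x. g\<^sub>2 x - g\<^sub>1 x) + l2_norm (\<lambda>x. g\<^sub>1 x - g x)"
    using l2_dist_triangle[OF f_l2(1) g\<^sub>2 g] l2_dist_triangle[OF g\<^sub>2 g\<^sub>1(1) g] by linarith
  then have "l2_norm (\<lambda>x. f x - g x) < \<epsilon>" using close\<^sub>1(1) close\<^sub>2(1) close\<^sub>3(1) by linarith
  moreover have "l2_norm (\<lambda>x. shift_op J c d f x - shift_op J c d g x)
      \<le> l2_norm (\<lambda>x. shift_op J c d f x - shift_op J c d g\<^sub>2 x)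
        + l2_norm (\<lambda>x. shift_op J c d g\<^sub>2 x - shift_op J c d g\<^sub>1 x)
        + l2_norm (\<lambda>x. shift_op J c d g\<^sub>1 x - shift_op J c d g x)"
    using l2_dist_triangle[OF f_l2(2) Tg\<^sub>2 Tg] l2_dist_triangle[OF Tg\<^sub>2 g\<^sub>1(2) Tg] by linarith
  then have "l2_norm (\<lambda>x. shift_op J c d f x - shift_op J c d g x) < \<epsilon>"
    using close\<^sub>1(2) close\<^sub>2(2) close\<^sub>3(2) by linarith
  ultimately show ?thesis using f by blast
qed

lemma l2_closure_eq_maximal_graph:
  "l2_closure (op_graph fin_span (shift_op J c d)) = maximal_graph (shift_op J c d)"
proof
  show "l2_closure (op_graph fin_span (shift_op J c d)) \<subseteq> maximal_graph (shift_op J c d)"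
    by (rule l2_closure_shift_op_subset[OF finite_J])
  show "maximal_graph (shift_op J c d) \<subseteq> l2_closure (op_graph fin_span (shift_op J c d))"
  proof
    fix x assume "x \<in> maximal_graph (shift_op J c d)"
    then obtain g where x: "x = (g, shift_op J c d g)" and g: "g \<in> l2" and Tg: "shift_op J c d g \<in> l2"
      by (auto simp: maximal_graph_def op_graph_def)
    have "\<forall>m. \<exists>f\<in>fin_span. l2_norm (\<lambda>y. f y - g y) < inverse (Suc m)
        \<and> l2_norm (\<lambda>y. shift_op J c d f y - shift_op J c d g y) < inverse (Suc m)"
      using approx_by_fin_span[OF g Tg] by simp
    then obtain F where F: "\<And>m. F m \<in> fin_span"
      and close: "\<And>m. l2_norm (\<lambda>y. F m y - g y) < inverse (Suc m)"
        "\<And>m. l2_norm (\<lambda>y. shift_op J c d (F m) y - shift_op J c d g y) < inverse (Suc m)"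
      by metis
    have "(\<lambda>m. l2_norm (\<lambda>y. F m y - g y)) \<longlonglongrightarrow> 0"
      "(\<lambda>m. l2_norm (\<lambda>y. shift_op J c d (F m) y - shift_op J c d g y)) \<longlonglongrightarrow> 0"
      using close by (auto intro!: Lim_null_comparison[OF _ LIMSEQ_inverse_real_of_nat] always_eventually
          less_imp_le simp: l2_norm_nonneg)
    then show "x \<in> l2_closure (op_graph fin_span (shift_op J c d))"
      unfolding l2_closure_def op_graph_def using x g Tg F
      by (auto intro!: exI[where x = "\<lambda>m. (F m, shift_op J c d (F m))"])
  qed
qed

lemma essentially_self_adjoint_shift_op:
  assumes symmetric: "shift_op_adj J c d = shift_op J c d"
  shows "essentially_self_adjoint (op_graph fin_span (shift_op J c d))"
proof (rule essentially_self_adjointI)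
  show "op_graph fin_span (shift_op J c d) \<subseteq> l2 \<times> l2"
    by (rule op_graph_shift_op_subset_l2[OF finite_J])
  show "fin_span \<subseteq> op_dom (op_graph fin_span (shift_op J c d))"
    by (force simp: op_dom_def op_graph_def)
  show "l2_closure (op_graph fin_span (shift_op J c d)) = l2_adj (op_graph fin_span (shift_op J c d))"
    by (simp add: l2_closure_eq_maximal_graph l2_adj_shift_op[OF finite_J] symmetric)
qed

lemma adj_coeff_growth: "shift_op_growth J (adj_coeff c d) (\<lambda>j. - d j) \<rho> \<kappa> L (C * (1 + L)\<^sup>2)"
proof unfold_locales
  fix j p assume j: "j \<in> J"
  have \<kappa>': "\<kappa> (p - d j) = \<kappa> p" using \<kappa>_shift[OF j, of "p - d j"] by simp
  have \<rho>': "\<bar>\<rho> (p - d j) - \<rho> p\<bar> \<le> L" using \<rho>_shift[OF j, of "p - d j"] by (simp add: abs_minus_commute)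
  show "\<kappa> (p + - d j) = \<kappa> p" using \<kappa>' by simp
  show "\<bar>\<rho> (p + - d j) - \<rho> p\<bar> \<le> L" using \<rho>' by simp
  have "1 + \<rho> (p - d j) \<le> 1 + \<rho> p + L" using \<rho>' by (simp add: abs_le_iff)
  also have "\<dots> \<le> (1 + L) * (1 + \<rho> p)"
    using mult_nonneg_nonneg[OF L_nonneg \<rho>_nonneg[of p]] by (simp add: algebra_simps)
  finally have "1 + \<rho> (p - d j) \<le> (1 + L) * (1 + \<rho> p)" .
  then have "(1 + \<rho> (p - d j))\<^sup>2 \<le> ((1 + L) * (1 + \<rho> p))\<^sup>2"
    by (rule power_mono) (simp add: \<rho>_nonneg)
  then have "C * (1 + \<rho> (p - d j))\<^sup>2 * \<kappa> p \<le> C * ((1 + L) * (1 + \<rho> p))\<^sup>2 * \<kappa> p"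
    by (rule mult_right_mono[OF mult_left_mono[OF _ C_nonneg] \<kappa>_nonneg])
  with coeff_growth[OF j, of "p - d j"] \<kappa>'
  show "(cmod (adj_coeff c d j p))\<^sup>2 \<le> C * (1 + L)\<^sup>2 * (1 + \<rho> p)\<^sup>2 * \<kappa> p"
    by (simp add: adj_coeff_def power_mult_distrib mult_ac)
qed (use finite_J \<rho>_nonneg \<kappa>_nonneg L_nonneg C_nonneg in auto)

lemma sym_coeff_growth:
  "shift_op_growth (J <+> J) (sym_coeff c d) (sym_shift d) \<rho> \<kappa> L (C * (1 + L)\<^sup>2)"
proof -
  interpret adj: shift_op_growth J "adj_coeff c d" "\<lambda>j. - d j" \<rho> \<kappa> L "C * (1 + L)\<^sup>2"
    by (rule adj_coeff_growth)
  have "C * 1 \<le> C * (1 + L)\<^sup>2"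
    using L_nonneg by (intro mult_left_mono[OF one_le_power C_nonneg]) simp
  then have "C * ((1 + \<rho> p)\<^sup>2 * \<kappa> p) \<le> C * (1 + L)\<^sup>2 * ((1 + \<rho> p)\<^sup>2 * \<kappa> p)" for p
    by (intro mult_right_mono) (simp_all add: \<kappa>_nonneg)
  then have grow: "C * (1 + \<rho> p)\<^sup>2 * \<kappa> p \<le> C * (1 + L)\<^sup>2 * (1 + \<rho> p)\<^sup>2 * \<kappa> p" for p
    by (simp add: mult.assoc)
  have half: "(cmod (z / 2))\<^sup>2 \<le> (cmod z)\<^sup>2" for z :: complex
    by (simp add: norm_divide power_divide)
  show ?thesis
  proof unfold_locales
    fix i p assume "i \<in> J <+> J"
    then obtain j where j: "j \<in> J" and i: "i = Inl j \<or> i = Inr j" by auto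
    show "\<kappa> (p + sym_shift d i) = \<kappa> p"
      using i \<kappa>_shift[OF j] adj.\<kappa>_shift[OF j] by (auto simp: sym_shift_def)
    show "\<bar>\<rho> (p + sym_shift d i) - \<rho> p\<bar> \<le> L"
      using i \<rho>_shift[OF j] adj.\<rho>_shift[OF j] by (auto simp: sym_shift_def)
    show "(cmod (sym_coeff c d i p))\<^sup>2 \<le> C * (1 + L)\<^sup>2 * (1 + \<rho> p)\<^sup>2 * \<kappa> p"
      using i
    proof
      assume "i = Inl j"
      then have "(cmod (sym_coeff c d i p))\<^sup>2 \<le> (cmod (c j p))\<^sup>2"
        using half by (simp add: sym_coeff_def)
      then show ?thesis using coeff_growth[OF j, of p] grow[of p] by linarith
    next
      assume "i = Inr j"
      then have "(cmod (sym_coeff c d i p))\<^sup>2 \<le> (cmod (adj_coeff c d j p))\<^sup>2"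
        using half by (simp add: sym_coeff_def)
      then show ?thesis using adj.coeff_growth[OF j, of p] by linarith
    qed
  qed (use finite_J \<rho>_nonneg \<kappa>_nonneg L_nonneg C_nonneg in auto)
qed

lemma essentially_self_adjoint_sym_part:
  "essentially_self_adjoint (op_graph fin_span (\<lambda>f p. (shift_op J c d f p + shift_op_adj J c d f p) / 2))"
proof -
  interpret sym: shift_op_growth "J <+> J" "sym_coeff c d" "sym_shift d" \<rho> \<kappa> L "C * (1 + L)\<^sup>2"
    by (rule sym_coeff_growth)
  have "(\<lambda>f p. (shift_op J c d f p + shift_op_adj J c d f p) / 2)
      = shift_op (J <+> J) (sym_coeff c d) (sym_shift d)"
    by (simp add: fun_eq_iff shift_op_sym[OF finite_J])
  then show ?thesis
    using sym.essentially_self_adjoint_shift_op[OF shift_op_adj_sym[OF finite_J]] by simp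
qed

end

section \<open>The constraint operator\<close>

(* A majorant of eta^2 that is invariant under shifts by 2 Z: the nonzero points of l + 2 Z have
   distance at least 2 min (frac (l / 2)) (1 - frac (l / 2)) from 0. For l in 2 Z the junk value
   inverse 0 = 0 is harmless, as eta 0 = 0 and all other points of 2 Z have |l| >= 2. *)
definition eta_weight :: "real \<Rightarrow> real" where
  "eta_weight l = 1 + inverse (frac (l / 2)) + inverse (1 - frac (l / 2))"

lemma eta_weight_ge_1: "1 \<le> eta_weight l"
  using frac_lt_1[of "l / 2"] by (simp add: eta_weight_def)

lemma eta_weight_periodic:
  assumes "t / 2 \<in> \<int>" shows "eta_weight (l + t) = eta_weight l"
proof -
  have "frac ((l + t) / 2) = frac (l / 2)"
    using frac_add_int_right[OF assms, of "l / 2"] by (simp add: add_divide_distrib)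
  then show ?thesis by (simp add: eta_weight_def)
qed

lemma eta_power2: "(eta l)\<^sup>2 = (if l = 0 then 0 else 1 / \<bar>l\<bar>)"
  by (simp add: eta_def power_divide)

lemma power2_mult_eta_power2: "l\<^sup>2 * (eta l)\<^sup>2 = \<bar>l\<bar>"
proof (cases "l = 0")
  case False
  have "l\<^sup>2 * (eta l)\<^sup>2 = \<bar>l\<bar> * \<bar>l\<bar> / \<bar>l\<bar>"
    unfolding eta_power2 using False by (simp add: power2_eq_square)
  also have "\<dots> = \<bar>l\<bar>" using False by (simp del: abs_mult_self_eq)
  finally show ?thesis .
qed simp

lemma min_frac_le_abs:
  fixes y :: real shows "min (frac y) (1 - frac y) \<le> \<bar>y\<bar>"
proof -
  have y: "y = of_int \<lfloor>y\<rfloor> + frac y" by (simp add: frac_def)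
  show ?thesis
  proof (cases "0 \<le> \<lfloor>y\<rfloor>")
    case True
    then have "0 \<le> real_of_int \<lfloor>y\<rfloor>" by simp
    then have "frac y \<le> \<bar>y\<bar>" using y abs_ge_self[of y] by linarith
    then show ?thesis by (simp add: min_le_iff_disj)
  next
    case False
    then have "\<lfloor>y\<rfloor> \<le> -1" by linarith
    then have "real_of_int \<lfloor>y\<rfloor> \<le> -1" by (metis of_int_le_iff of_int_minus of_int_1)
    then have "1 - frac y \<le> \<bar>y\<bar>" using y abs_ge_minus_self[of y] by linarith
    then show ?thesis by (simp add: min_le_iff_disj)
  qed
qed

lemma eta_power2_le_weight: "(eta l)\<^sup>2 \<le> eta_weight l"
proof (cases "l = 0")
  case True
  then show ?thesis using eta_weight_ge_1[of l] by (simp add: eta_power2)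
next
  case False
  define y where "y = l / 2"
  have y: "y \<noteq> 0" "\<bar>l\<bar> = 2 * \<bar>y\<bar>" using False by (auto simp: y_def)
  have fr: "0 \<le> frac y" "frac y < 1" by (auto simp: frac_lt_1)
  have weight: "eta_weight l = 1 + inverse (frac y) + inverse (1 - frac y)"
    by (simp add: eta_weight_def y_def)
  have "inverse \<bar>l\<bar> \<le> eta_weight l"
  proof (cases "frac y = 0")
    case True
    then have "1 \<le> \<bar>y\<bar>" using y(1) by (intro Ints_nonzero_abs_ge1) simp
    then have "inverse \<bar>l\<bar> \<le> inverse 1" using y(2) by (intro le_imp_inverse_le) auto
    then have "inverse \<bar>l\<bar> \<le> 1" by simp
    moreover have "0 \<le> inverse (frac y)" "0 \<le> inverse (1 - frac y)" using fr by auto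
    ultimately show ?thesis using weight by linarith
  next
    case False
    then have m: "0 < min (frac y) (1 - frac y)" using fr by simp
    then have "inverse \<bar>l\<bar> \<le> inverse (min (frac y) (1 - frac y))"
      using min_frac_le_abs[of y] y(2) by (intro le_imp_inverse_le) auto
    also have "\<dots> \<le> inverse (frac y) + inverse (1 - frac y)" using fr m by (simp add: min_def)
    finally show ?thesis using weight by simp
  qed
  then show ?thesis using False by (simp add: eta_power2 inverse_eq_divide)
qed

lemma eta_shift_power2_le:
  assumes t: "t / 2 \<in> \<int>" "t \<noteq> 0"
  shows "(eta (l + t))\<^sup>2 * \<bar>l\<bar> \<le> 2 * \<bar>t\<bar> * eta_weight l"
proof -
  obtain k :: int where k: "t / 2 = of_int k" using t(1) by (auto elim: Ints_cases)
  then have "k \<noteq> 0" using t(2) by auto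
  then have "1 \<le> \<bar>real_of_int k\<bar>" by linarith
  then have t1: "1 \<le> \<bar>t\<bar>" using k by linarith
  have w1: "1 \<le> eta_weight l" by (rule eta_weight_ge_1)
  show ?thesis
  proof (cases "2 * \<bar>t\<bar> \<le> \<bar>l\<bar>")
    case True
    then have lt: "\<bar>l\<bar> / 2 \<le> \<bar>l + t\<bar>" and l: "0 < \<bar>l\<bar>" using t1 by linarith+
    then have "(eta (l + t))\<^sup>2 = inverse \<bar>l + t\<bar>" by (auto simp: eta_power2 inverse_eq_divide)
    also have "\<dots> \<le> inverse (\<bar>l\<bar> / 2)" using lt l by (intro le_imp_inverse_le) auto
    finally have "(eta (l + t))\<^sup>2 * \<bar>l\<bar> \<le> inverse (\<bar>l\<bar> / 2) * \<bar>l\<bar>"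
      by (rule mult_right_mono) simp
    also have "\<dots> = 2" using l by simp
    also have "\<dots> \<le> 2 * \<bar>t\<bar> * eta_weight l" using mult_mono[OF t1 w1] by simp
    finally show ?thesis .
  next
    case False
    have "(eta (l + t))\<^sup>2 \<le> eta_weight l"
      using eta_power2_le_weight[of "l + t"] eta_weight_periodic[OF t(1)] by simp
    then have "(eta (l + t))\<^sup>2 * \<bar>l\<bar> \<le> eta_weight l * (2 * \<bar>t\<bar>)"
      by (rule mult_mono) (use False w1 in auto)
    then show ?thesis by (simp add: mult_ac)
  qed
qed

lemma u0_power2: "(u0 l)\<^sup>2 = 16 * l\<^sup>2"
proof -
  have "u0 l = - 4 * \<bar>l\<bar>" by (simp add: u0_def mult.assoc power2_mult_eta_power2)
  then show ?thesis by (simp add: power_mult_distrib)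
qed

lemma u4_power2_le:
  assumes "s \<in> {1, -1}" shows "(u4 s l)\<^sup>2 \<le> 32 * l\<^sup>2 * eta_weight l"
proof -
  have "(u4 s l)\<^sup>2 = 4 * ((eta (l + s * 4))\<^sup>2 * (l\<^sup>2 * (eta l)\<^sup>2)) * l\<^sup>2"
    by (simp add: u4_def power_mult_distrib power2_eq_square)
  also have "\<dots> = 4 * ((eta (l + s * 4))\<^sup>2 * \<bar>l\<bar>) * l\<^sup>2" by (simp add: power2_mult_eta_power2)
  also have "\<dots> \<le> 4 * (2 * \<bar>s * 4\<bar> * eta_weight l) * l\<^sup>2"
    using assms by (intro mult_right_mono mult_left_mono eta_shift_power2_le) auto
  also have "\<dots> = 32 * l\<^sup>2 * eta_weight l" using assms by auto
  finally show ?thesis .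
qed

lemma u2_power2_le:
  assumes "s \<in> {1, -1}" shows "(u2 mu s l x)\<^sup>2 \<le> 36 / mu\<^sup>2 * x\<^sup>2 * eta_weight l"
proof -
  have "s\<^sup>2 = 1" using assms by auto
  then have "(u2 mu s l x)\<^sup>2 = 9 / mu\<^sup>2 * x\<^sup>2 * ((eta (l + s * 2))\<^sup>2 * (l\<^sup>2 * (eta l)\<^sup>2))"
    by (simp add: u2_def power_mult_distrib power_divide)
  also have "\<dots> = 9 / mu\<^sup>2 * x\<^sup>2 * ((eta (l + s * 2))\<^sup>2 * \<bar>l\<bar>)" by (simp add: power2_mult_eta_power2)
  also have "\<dots> \<le> 9 / mu\<^sup>2 * x\<^sup>2 * (2 * \<bar>s * 2\<bar> * eta_weight l)"
    using assms by (intro mult_left_mono eta_shift_power2_le) auto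
  also have "\<dots> = 36 / mu\<^sup>2 * x\<^sup>2 * eta_weight l" using assms by auto
  finally show ?thesis .
qed

(* U4 s and U2 s t stand for the terms u_{4s} and u_{2s,2t} of C, s, t in {1, -1}; the factor t
   in the coefficient of U2 s t accounts for u_{2s,-2} = - u_{2s,2}. *)
datatype C_term = U0 | U4 real | U2 real real

definition C_terms :: "C_term set" where
  "C_terms = {U0, U4 1, U4 (-1), U2 1 1, U2 (-1) 1, U2 1 (-1), U2 (-1) (-1)}"

fun C_coeff :: "real \<Rightarrow> C_term \<Rightarrow> real \<times> real \<Rightarrow> real" where
  "C_coeff mu U0 (l, x) = u0 l"
| "C_coeff mu (U4 s) (l, x) = u4 s l"
| "C_coeff mu (U2 s t) (l, x) = t * u2 mu s l x"

fun C_shift :: "real \<Rightarrow> C_term \<Rightarrow> real \<times> real" where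
  "C_shift mu U0 = (0, 0)"
| "C_shift mu (U4 s) = (s * 4, 0)"
| "C_shift mu (U2 s t) = (s * 2, t * (2 * mu))"

lemma finite_C_terms: "finite C_terms"
  unfolding C_terms_def by simp

lemma C_ket_eq:
  "C_ket K mu p q = (\<Sum>i\<in>C_terms. complex_of_real (K * C_coeff mu i p) * ket (p + C_shift mu i) q)"
  by (cases p) (simp add: C_ket_def C_terms_def algebra_simps)

lemma sum_support_ket:
  fixes f :: "'a::ab_group_add \<Rightarrow> complex"
  assumes "finite {p. f p \<noteq> 0}"
  shows "(\<Sum>p | f p \<noteq> 0. f p * (a p * ket (p + e) q)) = a (q - e) * f (q - e)"
proof -
  have "(\<Sum>p | f p \<noteq> 0. f p * (a p * ket (p + e) q)) = (\<Sum>p | f p \<noteq> 0. if p = q - e then f p * a p else 0)"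
    by (rule sum.cong) (auto simp: ket_def)
  also have "\<dots> = a (q - e) * f (q - e)" using assms by simp
  finally show ?thesis .
qed

lemma C_op_eq:
  assumes "f \<in> fin_span"
  shows "C_op K mu f = shift_op_adj C_terms (\<lambda>i p. complex_of_real (K * C_coeff mu i p)) (C_shift mu) f"
proof
  fix q
  have fin: "finite {p. f p \<noteq> 0}" using assms by (simp add: fin_span_def)
  have "C_op K mu f q = (\<Sum>i\<in>C_terms. \<Sum>p | f p \<noteq> 0.
      f p * (complex_of_real (K * C_coeff mu i p) * ket (p + C_shift mu i) q))"
    by (simp add: C_op_def C_ket_eq sum_distrib_left sum.swap[of _ C_terms])
  also have "\<dots> = shift_op_adj C_terms (\<lambda>i p. complex_of_real (K * C_coeff mu i p)) (C_shift mu) f q"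
    by (simp add: sum_support_ket[OF fin] shift_op_adj_def shift_op_def adj_coeff_def)
  finally show "C_op K mu f q
      = shift_op_adj C_terms (\<lambda>i p. complex_of_real (K * C_coeff mu i p)) (C_shift mu) f q" .
qed

lemma C_coeff_power2_le:
  assumes "0 < mu" and "i \<in> C_terms"
  shows "(C_coeff mu i (l, x))\<^sup>2 \<le> (32 + 36 / mu\<^sup>2) * (1 + (\<bar>l\<bar> + \<bar>x\<bar>))\<^sup>2 * eta_weight l"
proof -
  define \<rho> where "\<rho> = 1 + (\<bar>l\<bar> + \<bar>x\<bar>)"
  define w where "w = eta_weight l"
  have w: "1 \<le> w" by (simp add: w_def eta_weight_ge_1)
  have "16 * l\<^sup>2 \<le> 32 * l\<^sup>2 * w"
    using mult_left_mono[OF w, of "32 * l\<^sup>2"] zero_le_power2[of l] by linarith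
  then have "(C_coeff mu i (l, x))\<^sup>2 \<le> 32 * l\<^sup>2 * w \<or> (C_coeff mu i (l, x))\<^sup>2 \<le> 36 / mu\<^sup>2 * x\<^sup>2 * w"
    using assms(2) u0_power2[of l] u4_power2_le[of _ l] u2_power2_le[of _ mu l x]
    by (auto simp: C_terms_def power_mult_distrib w_def)
  moreover have "\<bar>l\<bar> \<le> \<rho>" "\<bar>x\<bar> \<le> \<rho>" by (auto simp: \<rho>_def)
  then have "l\<^sup>2 \<le> \<rho>\<^sup>2" "x\<^sup>2 \<le> \<rho>\<^sup>2" by (auto simp: abs_le_square_iff[symmetric] \<rho>_def)
  then have "32 * l\<^sup>2 * w \<le> 32 * \<rho>\<^sup>2 * w" "36 / mu\<^sup>2 * x\<^sup>2 * w \<le> 36 / mu\<^sup>2 * \<rho>\<^sup>2 * w"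
    using w by (simp_all add: mult_right_mono mult_left_mono del: times_divide_eq_left)
  moreover have "0 \<le> 32 * \<rho>\<^sup>2 * w" "0 \<le> 36 / mu\<^sup>2 * \<rho>\<^sup>2 * w" using w by simp_all
  ultimately have "(C_coeff mu i (l, x))\<^sup>2 \<le> 32 * \<rho>\<^sup>2 * w + 36 / mu\<^sup>2 * \<rho>\<^sup>2 * w" by linarith
  then show ?thesis by (simp add: \<rho>_def w_def ring_distribs)
qed

lemma C_shift_bounds:
  assumes "0 < mu" and "i \<in> C_terms"
  shows "fst (C_shift mu i) / 2 \<in> \<int>" and "\<bar>fst (C_shift mu i)\<bar> \<le> 4" and "\<bar>snd (C_shift mu i)\<bar> \<le> 2 * mu"
  using assms by (auto simp: C_terms_def)

lemma shift_op_growth_C: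
  assumes mu: "0 < mu"
  shows "shift_op_growth C_terms (\<lambda>i p. complex_of_real (K * C_coeff mu i p)) (C_shift mu)
    (\<lambda>(l, x). \<bar>l\<bar> + \<bar>x\<bar>) (\<lambda>(l, x). eta_weight l) (4 + 2 * mu) (K\<^sup>2 * (32 + 36 / mu\<^sup>2))"
proof unfold_locales
  fix i and p :: "real \<times> real" assume i: "i \<in> C_terms"
  obtain l x where p: "p = (l, x)" by (cases p)
  note shift = C_shift_bounds[OF mu i]
  show "(case p + C_shift mu i of (l, x) \<Rightarrow> eta_weight l) = (case p of (l, x) \<Rightarrow> eta_weight l)"
    using eta_weight_periodic[OF shift(1)] by (simp add: p split_beta)
  show "\<bar>(case p + C_shift mu i of (l, x) \<Rightarrow> \<bar>l\<bar> + \<bar>x\<bar>) - (case p of (l, x) \<Rightarrow> \<bar>l\<bar> + \<bar>x\<bar>)\<bar> \<le> 4 + 2 * mu"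
    using shift(2,3) by (simp add: p split_beta abs_le_iff) linarith
  show "(cmod (complex_of_real (K * C_coeff mu i p)))\<^sup>2
      \<le> K\<^sup>2 * (32 + 36 / mu\<^sup>2) * (1 + (case p of (l, x) \<Rightarrow> \<bar>l\<bar> + \<bar>x\<bar>))\<^sup>2 * (case p of (l, x) \<Rightarrow> eta_weight l)"
    using mult_left_mono[OF C_coeff_power2_le[OF mu i, of l x], of "K\<^sup>2"]
    by (simp add: p norm_mult power_mult_distrib mult_ac)
qed (use mu eta_weight_ge_1 finite_C_terms in \<open>auto intro: order_trans[OF zero_le_one]\<close>)

lemma C_graph_eq:
  "C_graph K mu = op_graph fin_span
     (shift_op C_terms (adj_coeff (\<lambda>i p. complex_of_real (K * C_coeff mu i p)) (C_shift mu))
       (\<lambda>i. - C_shift mu i))"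
  unfolding C_graph_def op_graph_def by (auto simp: C_op_eq shift_op_adj_def)

lemma C_dag_eq:
  assumes "f \<in> fin_span"
  shows "C_dag K mu f = shift_op C_terms (\<lambda>i p. complex_of_real (K * C_coeff mu i p)) (C_shift mu) f"
proof -
  let ?T = "shift_op C_terms (\<lambda>i p. complex_of_real (K * C_coeff mu i p)) (C_shift mu)"
  have adj: "l2_adj (C_graph K mu) = maximal_graph ?T"
    unfolding C_graph_eq l2_adj_shift_op[OF finite_C_terms] shift_op_adj_adj ..
  have "?T f \<in> l2" using assms by (intro fin_span_in_l2 shift_op_fin_span finite_C_terms)
  then have "(f, ?T f) \<in> l2_adj (C_graph K mu)"
    using assms by (auto simp: adj maximal_graph_def op_graph_def fin_span_in_l2)
  moreover have "h = ?T f" if "(f, h) \<in> l2_adj (C_graph K mu)" for h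
    using that by (auto simp: adj maximal_graph_def op_graph_def)
  ultimately show ?thesis unfolding C_dag_def by (intro the_equality)
qed

lemma Csym_graph_eq:
  "Csym_graph K mu = op_graph fin_span (\<lambda>f p.
     (shift_op C_terms (\<lambda>i p. complex_of_real (K * C_coeff mu i p)) (C_shift mu) f p
      + shift_op_adj C_terms (\<lambda>i p. complex_of_real (K * C_coeff mu i p)) (C_shift mu) f p) / 2)"
  unfolding Csym_graph_def op_graph_def by (auto simp: C_op_eq C_dag_eq add.commute)

theorem mainTheorem1:
  fixes N hbar beta Delta mu :: real
  assumes "N > 0" and "hbar > 0" and "beta > 0" and "Delta > 0" and "mu > 0"
  shows "fin_span \<subseteq> op_dom (l2_adj (C_graph (Kconst N hbar beta Delta) mu))
       \<and> essentially_self_adjoint (Csym_graph (Kconst N hbar beta Delta) mu)"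
proof
  \<comment> \<open>only \<open>mu > 0\<close> is used: the argument works for every value of the constant K\<close>
  define K where "K = Kconst N hbar beta Delta"
  interpret shift_op_growth C_terms "\<lambda>i p. complex_of_real (K * C_coeff mu i p)" "C_shift mu"
    "\<lambda>(l, x). \<bar>l\<bar> + \<bar>x\<bar>" "\<lambda>(l, x). eta_weight l" "4 + 2 * mu" "K\<^sup>2 * (32 + 36 / mu\<^sup>2)"
    using shift_op_growth_C[OF \<open>mu > 0\<close>] .
  show "fin_span \<subseteq> op_dom (l2_adj (C_graph (Kconst N hbar beta Delta) mu))"
    unfolding K_def[symmetric] C_graph_eq
    by (rule fin_span_subset_dom_l2_adj_shift_op[OF finite_C_terms])
  show "essentially_self_adjoint (Csym_graph (Kconst N hbar beta Delta) mu)"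
    unfolding K_def[symmetric] Csym_graph_eq by (rule essentially_self_adjoint_sym_part)
qed

end
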